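(* Let $f\in E^{\nu}_{p,q}$ with $p\ge1$, $q\ge2$, in the corresponding coordinates $x=(\xi,\eta,x_n)$. Then $$\Delta_x f=4(p-3q+3)(x_n^2+|\xi|^2)+4(8\nu-1+q-3p)|\eta|^2.$$
   Context: $f$ is a real homogeneous quartic on $\mathbb{R}^n$ with $|\nabla_x f|^2=16|x|^6$. We say $f\in E^{\nu}_{p,q}$ if there are orthonormal coordinates $x=(\xi,\eta,x_n)$, $\xi\in\mathbb{R}^p$, $\eta\in\mathbb{R}^q$, $p+q=n-1$, in which $f(x)=x_n^4+2(|\xi|^2-3|\eta|^2)x_n^2+8\psi(\xi,\eta)x_n+\theta(\xi,\eta)$ with $\theta$ a homogeneous quartic, $\psi(\xi,\eta)=\xi^\top A_\eta\xi$ where $A_\eta=\sum_{i=1}^q\eta_iA_i$ for symmetric $A_i\in\mathbb{R}^{p\times p}$, and for every $\eta\ne0$ the matrix $A_\eta$ is similar to $|\eta|\,\mathrm{diag}(\mathbf{1}_\nu,-\mathbf{1}_\nu,\mathbf{0}_{p-2\nu})$. *)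

theory Defs
  imports "HOL-Analysis.Analysis"
begin

definition grad_sq :: "('a::euclidean_space \<Rightarrow> real) \<Rightarrow> 'a \<Rightarrow> real" where
  "grad_sq f x = (\<Sum>b\<in>Basis. (deriv (\<lambda>t. f (x + t *\<^sub>R b)) 0)\<^sup>2)"

definition laplacian :: "('a::euclidean_space \<Rightarrow> real) \<Rightarrow> 'a \<Rightarrow> real" where
  "laplacian f x = (\<Sum>b\<in>Basis. deriv (deriv (\<lambda>t. f (x + t *\<^sub>R b))) 0)"

definition hom_quartic :: "('a::euclidean_space \<Rightarrow> real) \<Rightarrow> bool" where
  "hom_quartic \<theta> \<longleftrightarrow> (\<exists>C :: 'a \<Rightarrow> 'a \<Rightarrow> 'a \<Rightarrow> 'a \<Rightarrow> real.
     \<forall>z. \<theta> z = (\<Sum>a\<in>Basis. \<Sum>b\<in>Basis. \<Sum>c\<in>Basis. \<Sum>d\<in>Basis.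
                    C a b c d * (z \<bullet> a) * (z \<bullet> b) * (z \<bullet> c) * (z \<bullet> d)))"

definition similar_matrix :: "real^'n^'n \<Rightarrow> real^'n^'n \<Rightarrow> bool" where
  "similar_matrix A B \<longleftrightarrow> (\<exists>P. invertible P \<and> A = matrix_inv P ** B ** P)"

text \<open>A matrix similar to r * diag(1_nu, -1_nu, 0_(p-2nu)); since the index type is unordered,
  the diagonal is given by a sign pattern s with exactly nu entries 1, nu entries -1, rest 0.\<close>
definition similar_to_signed_diag :: "real^'n^'n \<Rightarrow> real \<Rightarrow> nat \<Rightarrow> bool" where
  "similar_to_signed_diag A r \<nu> \<longleftrightarrow> (\<exists>s :: 'n \<Rightarrow> real.
     (\<forall>i. s i \<in> {-1, 0, 1}) \<and> card {i. s i = 1} = \<nu> \<and> card {i. s i = -1} = \<nu> \<and>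
     similar_matrix A (\<chi> i j. if i = j then r * s i else 0))"

end

theory Submission
  imports Defs
begin

text \<open>
  Writing \<open>x = ((\<xi>, \<eta>), t)\<close>, every partial derivative of \<open>f\<close> is a polynomial in \<open>t\<close>, so the
  eikonal equation \<open>|\<nabla>f|\<^sup>2 = 16 |x|\<^sup>6\<close> splits into identities between the coefficients of \<open>t\<close>.
  Scaling \<open>\<xi>\<close> by \<open>s\<close> and comparing coefficients of \<open>s\<close>, then polarizing, determines the
  symmetric 4-linear form of \<open>\<theta>\<close> on the blocks: \<open>\<theta>(\<xi>,0) = |\<xi>|\<^sup>4 - 2 |\<psi>(\<xi>,\<cdot>)|\<^sup>2\<close>,
  \<open>\<theta>(0,\<eta>) = |\<eta>|\<^sup>4\<close>, the \<open>\<xi>\<^sup>2\<eta>\<^sup>2\<close> part is \<open>4/3 |A\<^sub>\<eta>\<xi>|\<^sup>2 - |\<xi>|\<^sup>2|\<eta>|\<^sup>2\<close> and there is no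
  \<open>\<xi>\<eta>\<^sup>3\<close> part. Taking traces, with \<open>tr A\<^sub>\<eta> = 0\<close> and \<open>tr A\<^sub>\<eta>\<^sup>2 = 2\<nu>|\<eta>|\<^sup>2\<close> read off from the
  similarity to \<open>|\<eta>| diag(1\<^sub>\<nu>, -1\<^sub>\<nu>, 0)\<close>, yields the Laplacian, except for the contribution
  of the \<open>\<xi>\<^sup>3\<eta>\<close> part. For fixed \<open>\<eta>\<close> that part is a symmetric trilinear form \<open>B\<close> with
  \<open>B(A\<^sub>\<eta>\<xi>,\<xi>,\<xi>) = 0\<close> and \<open>B(A\<^sub>\<eta>\<^sup>2\<xi>,\<xi>,\<xi>) = 2/3 |\<eta>|\<^sup>2 B(\<xi>,\<xi>,\<xi>)\<close>; together with
  \<open>A\<^sub>\<eta>\<^sup>3 = |\<eta>|\<^sup>2 A\<^sub>\<eta>\<close> this forces its trace to vanish.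
\<close>

lemma real_poly6_coeffs_eq_0:
  fixes c0 c1 c2 c3 c4 c5 c6 :: real
  assumes "\<And>s. c0 + c1 * s + c2 * s^2 + c3 * s^3 + c4 * s^4 + c5 * s^5 + c6 * s^6 = 0"
  shows "c0 = 0 \<and> c1 = 0 \<and> c2 = 0 \<and> c3 = 0 \<and> c4 = 0 \<and> c5 = 0 \<and> c6 = 0"
proof -
  let ?c = "\<lambda>i. [c0, c1, c2, c3, c4, c5, c6] ! i"
  have "\<forall>x. (\<Sum>i\<le>6. ?c i * x^i) = 0"
    using assms by (simp add: numeral_eq_Suc atMost_Suc add_ac)
  then have "\<forall>i\<le>6. ?c i = 0"
    using polyfun_eq_0 by blast
  then show ?thesis
    by (auto dest: spec[of _ 0] spec[of _ 1] spec[of _ 2] spec[of _ 3] spec[of _ 4]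
        spec[of _ 5] spec[of _ 6] simp: numeral_eq_Suc)
qed

lemma real_poly4_coeffs_eq_0:
  fixes c0 c1 c2 c3 c4 :: real
  assumes "\<And>s. c0 + c1 * s + c2 * s^2 + c3 * s^3 + c4 * s^4 = 0"
  shows "c0 = 0 \<and> c1 = 0 \<and> c2 = 0 \<and> c3 = 0 \<and> c4 = 0"
  using real_poly6_coeffs_eq_0[of c0 c1 c2 c3 c4 0 0] assms by simp

lemma sum_power2_quadratic:
  fixes a b c :: "'i \<Rightarrow> real"
  shows "(\<Sum>i\<in>I. (a i * t^2 + b i * t + c i)^2) =
    (\<Sum>i\<in>I. (a i)^2) * t^4 + (2 * (\<Sum>i\<in>I. a i * b i)) * t^3
    + (\<Sum>i\<in>I. (b i)^2 + 2 * a i * c i) * t^2 + (2 * (\<Sum>i\<in>I. b i * c i)) * t + (\<Sum>i\<in>I. (c i)^2)"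
proof -
  have "(a i * t^2 + b i * t + c i)^2 = (a i)^2 * t^4 + (2 * (a i * b i)) * t^3
      + ((b i)^2 + 2 * a i * c i) * t^2 + (2 * (b i * c i)) * t + (c i)^2" for i
    by (simp add: power2_eq_square power3_eq_cube power4_eq_xxxx algebra_simps)
  then show ?thesis
    by (simp add: sum.distrib sum_distrib_right[symmetric] sum_distrib_left[symmetric])
qed

lemma sum_power2_cubic:
  fixes a b c d :: "'i \<Rightarrow> real"
  shows "(\<Sum>i\<in>I. (a i + b i * s + c i * s^2 + d i * s^3)^2) =
    (\<Sum>i\<in>I. (a i)^2) + (2 * (\<Sum>i\<in>I. a i * b i)) * s + (\<Sum>i\<in>I. (b i)^2 + 2 * a i * c i) * s^2
    + (2 * (\<Sum>i\<in>I. a i * d i + b i * c i)) * s^3 + (\<Sum>i\<in>I. (c i)^2 + 2 * b i * d i) * s^4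
    + (2 * (\<Sum>i\<in>I. c i * d i)) * s^5 + (\<Sum>i\<in>I. (d i)^2) * s^6"
proof -
  have "(a i + b i * s + c i * s^2 + d i * s^3)^2 = (a i)^2 + (2 * (a i * b i)) * s
      + ((b i)^2 + 2 * a i * c i) * s^2 + (2 * (a i * d i + b i * c i)) * s^3
      + ((c i)^2 + 2 * b i * d i) * s^4 + (2 * (c i * d i)) * s^5 + (d i)^2 * s^6" for i
    by (simp add: power2_eq_square power3_eq_cube power4_eq_xxxx algebra_simps numeral_eq_Suc)
  then show ?thesis
    by (simp add: sum.distrib sum_distrib_right[symmetric] sum_distrib_left[symmetric])
qed

lemma sum_squares_eq_cube_coeffs:
  fixes a b c :: "'i \<Rightarrow> real" and a' b' c' :: "'j \<Rightarrow> real"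
  assumes h: "\<And>t. (\<Sum>i\<in>I. (a i * t^2 + b i * t + c i)^2) + (\<Sum>j\<in>J. (a' j * t^2 + b' j * t + c' j)^2)
      + (kc * t^3 + kb * t + ka)^2 = 16 * (t^2 + R)^3"
  shows "(\<Sum>i\<in>I. (b i)^2 + 2 * a i * c i) + (\<Sum>j\<in>J. (b' j)^2 + 2 * a' j * c' j) + kb^2 = 48 * R^2"
    and "2 * (\<Sum>i\<in>I. b i * c i) + 2 * (\<Sum>j\<in>J. b' j * c' j) + 2 * kb * ka = 0"
    and "(\<Sum>i\<in>I. (c i)^2) + (\<Sum>j\<in>J. (c' j)^2) + ka^2 = 16 * R^3"
proof -
  have "((\<Sum>i\<in>I. (c i)^2) + (\<Sum>j\<in>J. (c' j)^2) + ka^2 - 16 * R^3)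
    + (2 * (\<Sum>i\<in>I. b i * c i) + 2 * (\<Sum>j\<in>J. b' j * c' j) + 2 * kb * ka) * t
    + ((\<Sum>i\<in>I. (b i)^2 + 2 * a i * c i) + (\<Sum>j\<in>J. (b' j)^2 + 2 * a' j * c' j) + kb^2 - 48 * R^2) * t^2
    + (2 * (\<Sum>i\<in>I. a i * b i) + 2 * (\<Sum>j\<in>J. a' j * b' j) + 2 * kc * ka) * t^3
    + ((\<Sum>i\<in>I. (a i)^2) + (\<Sum>j\<in>J. (a' j)^2) + 2 * kc * kb - 48 * R) * t^4
    + 0 * t^5 + (kc^2 - 16) * t^6 = 0" for t
  proof -
    have "(kc * t^3 + kb * t + ka)^2 - 16 * (t^2 + R)^3 = (ka^2 - 16 * R^3) + (2 * kb * ka) * t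
        + (kb^2 - 48 * R^2) * t^2 + (2 * kc * ka) * t^3 + (2 * kc * kb - 48 * R) * t^4 + (kc^2 - 16) * t^6"
      by (simp add: power2_eq_square power3_eq_cube power4_eq_xxxx algebra_simps numeral_eq_Suc)
    with h[of t] show ?thesis
      unfolding sum_power2_quadratic by (simp add: algebra_simps)
  qed
  from real_poly6_coeffs_eq_0[OF this]
  show "(\<Sum>i\<in>I. (b i)^2 + 2 * a i * c i) + (\<Sum>j\<in>J. (b' j)^2 + 2 * a' j * c' j) + kb^2 = 48 * R^2"
    and "2 * (\<Sum>i\<in>I. b i * c i) + 2 * (\<Sum>j\<in>J. b' j * c' j) + 2 * kb * ka = 0"
    and "(\<Sum>i\<in>I. (c i)^2) + (\<Sum>j\<in>J. (c' j)^2) + ka^2 = 16 * R^3"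
    by simp_all
qed

lemma sum_squares_eq_cube_coeff3:
  fixes a b c d :: "'i \<Rightarrow> real" and a' b' c' d' :: "'j \<Rightarrow> real"
  assumes h: "\<And>s. 16 * (\<Sum>i\<in>I. (a i + b i * s + c i * s^2 + d i * s^3)^2)
      + 16 * (\<Sum>j\<in>J. (a' j + b' j * s + c' j * s^2 + d' j * s^3)^2) + k * s^4 = 16 * (s^2 * u + w)^3"
  shows "(\<Sum>i\<in>I. a i * d i + b i * c i) + (\<Sum>j\<in>J. a' j * d' j + b' j * c' j) = 0"
proof -
  have "(16 * (\<Sum>i\<in>I. (a i)^2) + 16 * (\<Sum>j\<in>J. (a' j)^2) - 16 * w^3)
    + (32 * (\<Sum>i\<in>I. a i * b i) + 32 * (\<Sum>j\<in>J. a' j * b' j)) * s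
    + (16 * (\<Sum>i\<in>I. (b i)^2 + 2 * a i * c i) + 16 * (\<Sum>j\<in>J. (b' j)^2 + 2 * a' j * c' j) - 48 * u * w^2) * s^2
    + (32 * (\<Sum>i\<in>I. a i * d i + b i * c i) + 32 * (\<Sum>j\<in>J. a' j * d' j + b' j * c' j)) * s^3
    + (16 * (\<Sum>i\<in>I. (c i)^2 + 2 * b i * d i) + 16 * (\<Sum>j\<in>J. (c' j)^2 + 2 * b' j * d' j) + k - 48 * u^2 * w) * s^4
    + (32 * (\<Sum>i\<in>I. c i * d i) + 32 * (\<Sum>j\<in>J. c' j * d' j)) * s^5
    + (16 * (\<Sum>i\<in>I. (d i)^2) + 16 * (\<Sum>j\<in>J. (d' j)^2) - 16 * u^3) * s^6 = 0" for s
  proof -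
    have "16 * (s^2 * u + w)^3 = 16 * w^3 + (48 * u * w^2) * s^2 + (48 * u^2 * w) * s^4 + (16 * u^3) * s^6"
      by (simp add: power2_eq_square power3_eq_cube power4_eq_xxxx algebra_simps numeral_eq_Suc)
    with h[of s] show ?thesis
      unfolding sum_power2_cubic by (simp add: algebra_simps)
  qed
  from real_poly6_coeffs_eq_0[OF this] show ?thesis by simp
qed

lemma deriv_quartic_at_0:
  fixes g :: "real \<Rightarrow> real"
  assumes g: "\<And>s. g s = c0 + c1 * s + c2 * s^2 + c3 * s^3 + c4 * s^4"
  shows "deriv g 0 = c1" and "deriv (deriv g) 0 = 2 * c2"
proof -
  have "(g has_real_derivative (c1 + 2 * c2 * s + 3 * c3 * s^2 + 4 * c4 * s^3)) (at s)" for s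
    unfolding g[abs_def] by (auto intro!: derivative_eq_intros simp: power2_eq_square power3_eq_cube)
  then have dg: "deriv g = (\<lambda>s. c1 + 2 * c2 * s + 3 * c3 * s^2 + 4 * c4 * s^3)"
    using DERIV_imp_deriv by blast
  then show "deriv g 0 = c1" by simp
  have "((\<lambda>s. c1 + 2 * c2 * s + 3 * c3 * s^2 + 4 * c4 * s^3) has_real_derivative 2 * c2) (at 0)"
    by (auto intro!: derivative_eq_intros)
  then show "deriv (deriv g) 0 = 2 * c2"
    using dg DERIV_imp_deriv by simp
qed

lemma matrix_mult_scaleR_right: "(X::real^'n^'m) ** (c *\<^sub>R Y) = c *\<^sub>R (X ** (Y::real^'k^'n))"
  by (simp add: matrix_matrix_mult_def vec_eq_iff sum_distrib_left algebra_simps)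

lemma matrix_mult_scaleR_left: "(c *\<^sub>R X::real^'n^'m) ** Y = c *\<^sub>R (X ** (Y::real^'k^'n))"
  by (simp add: matrix_matrix_mult_def vec_eq_iff sum_distrib_left algebra_simps)

lemma similar_matrixE:
  assumes "similar_matrix A D"
  obtains P Q :: "real^'n^'n" where "P ** Q = mat 1" "Q ** P = mat 1" "A = Q ** D ** P"
proof -
  obtain P where P: "invertible P" and A: "A = matrix_inv P ** D ** P"
    using assms unfolding similar_matrix_def by blast
  have "P ** matrix_inv P = mat 1" "matrix_inv P ** P = mat 1"
    using someI_ex[OF P[unfolded invertible_def]] unfolding matrix_inv_def by auto
  with A that show ?thesis by blast
qed

lemma similar_matrix_trace:
  assumes "similar_matrix (A::real^'n^'n) D"
  shows "trace A = trace D"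
proof -
  obtain P Q :: "real^'n^'n" where PQ: "P ** Q = mat 1" and A: "A = Q ** D ** P"
    using assms by (rule similar_matrixE)
  have "trace (Q ** D ** P) = trace (P ** (Q ** D))"
    by (rule trace_mul_sym)
  also have "\<dots> = trace D"
    by (simp add: matrix_mul_assoc PQ)
  finally show ?thesis using A by simp
qed

lemma similar_matrix_mult_self:
  assumes "similar_matrix (A::real^'n^'n) D"
  shows "similar_matrix (A ** A) (D ** D)"
proof -
  obtain P where "invertible P" and A: "A = matrix_inv P ** D ** P"
    using assms unfolding similar_matrix_def by blast
  then have "P ** matrix_inv P = mat 1"
    using someI_ex[of "\<lambda>Q. P ** Q = mat 1 \<and> Q ** P = mat 1"] unfolding invertible_def matrix_inv_def by auto
  then have "X ** P ** matrix_inv P = X" for X :: "real^'n^'n"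
    by (metis matrix_mul_assoc matrix_mul_rid)
  then have "A ** A = matrix_inv P ** (D ** D) ** P"
    unfolding A by (simp add: matrix_mul_assoc)
  with \<open>invertible P\<close> show ?thesis
    unfolding similar_matrix_def by blast
qed

lemma similar_matrix_cube:
  assumes "similar_matrix (A::real^'n^'n) D" and "D ** D ** D = c *\<^sub>R D"
  shows "A ** A ** A = c *\<^sub>R A"
proof -
  obtain P Q :: "real^'n^'n" where PQ: "P ** Q = mat 1" and A: "A = Q ** D ** P"
    using assms(1) by (rule similar_matrixE)
  have "X ** P ** Q = X" for X :: "real^'n^'n"
    by (metis matrix_mul_assoc PQ matrix_mul_rid)
  then have "A ** A ** A = Q ** (D ** D ** D) ** P"
    unfolding A by (simp add: matrix_mul_assoc)
  then show ?thesis
    using assms(2) A by (simp add: matrix_mult_scaleR_left matrix_mult_scaleR_right)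
qed

definition signed_diag :: "real \<Rightarrow> ('n \<Rightarrow> real) \<Rightarrow> real^'n^'n" where
  "signed_diag r s = (\<chi> i j. if i = j then r * s i else 0)"

lemma signed_diag_mult_self: "signed_diag r s ** signed_diag r s = signed_diag (r^2) (\<lambda>i. s i ^ 2)"
  by (simp add: signed_diag_def matrix_matrix_mult_def vec_eq_iff if_distrib[of "\<lambda>x. _ * x"]
      sum.If_cases power2_eq_square cong: if_cong)

lemma signed_diag_cube:
  assumes "\<forall>i. s i \<in> {-1, 0, 1}"
  shows "signed_diag r s ** signed_diag r s ** signed_diag r s = r^2 *\<^sub>R signed_diag r s"
proof -
  have "s i = 0 \<or> s i * s i = 1" for i using assms[rule_format, of i] by auto
  then show ?thesis
    unfolding signed_diag_mult_self
    by (simp add: signed_diag_def matrix_matrix_mult_def vec_eq_iff if_distrib[of "\<lambda>x. _ * x"]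
        sum.If_cases power2_eq_square cong: if_cong) blast
qed

lemma trace_signed_diag: "trace (signed_diag r s) = r * (\<Sum>i\<in>UNIV. s i)"
  by (simp add: trace_def signed_diag_def sum_distrib_left)

lemma sum_indicator_card: "(\<Sum>i\<in>(UNIV::'n::finite set). if P i then (1::real) else 0) = real (card {i. P i})"
  by (simp add: sum.If_cases)

lemma
  fixes A :: "real^'n^'n"
  assumes "similar_to_signed_diag A r \<nu>"
  shows trace_similar_to_signed_diag: "trace A = 0"
    and cube_similar_to_signed_diag: "A ** A ** A = r^2 *\<^sub>R A"
    and trace_square_similar_to_signed_diag: "trace (A ** A) = r^2 * (2 * real \<nu>)"
proof -
  obtain s :: "'n \<Rightarrow> real" where s: "\<forall>i. s i \<in> {-1, 0, 1}"
      "card {i. s i = 1} = \<nu>" "card {i. s i = -1} = \<nu>"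
    and sim: "similar_matrix A (signed_diag r s)"
    using assms unfolding similar_to_signed_diag_def signed_diag_def by blast
  have s_split: "s i = (if s i = 1 then 1 else 0) - (if s i = -1 then 1 else 0)"
    and s_sq: "s i ^ 2 = (if s i = 1 then 1 else 0) + (if s i = -1 then 1 else 0)" for i
    using s(1)[rule_format, of i] by auto
  have "(\<Sum>i\<in>UNIV. s i) = 0"
    by (subst s_split, subst sum_subtractf) (simp add: sum_indicator_card s(2,3))
  moreover have "(\<Sum>i\<in>UNIV. s i ^ 2) = 2 * real \<nu>"
    by (subst s_sq, subst sum.distrib) (simp add: sum_indicator_card s(2,3))
  ultimately show "trace A = 0" "A ** A ** A = r^2 *\<^sub>R A" "trace (A ** A) = r^2 * (2 * real \<nu>)"
    using similar_matrix_trace[OF sim] similar_matrix_cube[OF sim signed_diag_cube[OF s(1)]]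
      similar_matrix_trace[OF similar_matrix_mult_self[OF sim]]
    by (simp_all add: trace_signed_diag signed_diag_mult_self)
qed

lemma sum_axis_linear:
  fixes g :: "real^'n \<Rightarrow> real"
  assumes "linear g"
  shows "(\<Sum>i\<in>UNIV. v$i * g (axis i 1)) = g v"
proof -
  have "g v = g (\<Sum>i\<in>UNIV. v$i *\<^sub>R axis i 1)"
    using basis_expansion[of v] by (simp add: scalar_mult_eq_scaleR)
  also have "\<dots> = (\<Sum>i\<in>UNIV. v$i * g (axis i 1))"
    using assms by (simp add: linear_sum linear_cmul)
  finally show ?thesis by simp
qed

lemma matrix_vector_mult_axis_nth: "((N::real^'n^'m) *v axis i 1) $ l = N $ l $ i"
  by (simp add: matrix_vector_mult_def axis_def if_distrib[of "\<lambda>x. _ * x"] sum.If_cases cong: if_cong)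

lemma trace_eq_sum_axis: "trace (M::real^'n^'n) = (\<Sum>i\<in>UNIV. axis i 1 \<bullet> (M *v axis i 1))"
  by (simp add: trace_def inner_axis' matrix_vector_mult_axis_nth)

lemma norm_power2_vec_sum: "(norm (v::real^'n))^2 = (\<Sum>i\<in>UNIV. (v$i)^2)"
  by (simp only: power2_norm_eq_inner) (simp add: inner_vec_def power2_eq_square)

lemma symmetric_matrix_nth: "transpose M = M \<Longrightarrow> (M::'a^'n^'n) $ i $ j = M $ j $ i"
  by (metis transpose_def vec_lambda_beta)

lemma sum_norm_power2_columns:
  assumes "transpose M = M"
  shows "(\<Sum>i\<in>UNIV. (norm ((M::real^'n^'n) *v axis i 1))^2) = trace (M ** M)"
  unfolding norm_power2_vec_sum trace_def
  by (intro sum.cong refl)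
    (simp add: matrix_vector_mult_axis_nth matrix_matrix_mult_def power2_eq_square
      symmetric_matrix_nth[OF assms])

lemma inner_symmetric_matrix: "transpose M = M \<Longrightarrow> x \<bullet> ((M::real^'n^'n) *v y) = (M *v x) \<bullet> y"
  by (metis dot_lmul_matrix transpose_matrix_vector)

lemma norm_add_scaleR_power2:
  "(norm (x + s *\<^sub>R (e::'a::real_inner)))^2 = (norm x)^2 + 2 * s * (x \<bullet> e) + s^2 * (e \<bullet> e)"
  by (simp only: power2_norm_eq_inner)
    (simp add: inner_add_left inner_add_right inner_commute power2_eq_square algebra_simps)

lemma sum_Basis_vec: "(\<Sum>b\<in>(Basis::(real^'n) set). g b) = (\<Sum>i\<in>UNIV. g (axis i 1))"
proof -
  have B: "(Basis::(real^'n) set) = range (\<lambda>i. axis i 1)"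
    by (auto simp: Basis_vec_def)
  have "inj (\<lambda>i::'n. axis i (1::real))"
    by (auto simp: inj_def axis_eq_axis)
  then show ?thesis unfolding B by (simp add: sum.reindex)
qed

lemma sum_Basis_prod:
  fixes g :: "('a::euclidean_space \<times> 'b::euclidean_space) \<Rightarrow> real"
  shows "sum g Basis = (\<Sum>u\<in>Basis. g (u, 0)) + (\<Sum>v\<in>Basis. g (0, v))"
proof -
  have "inj_on (\<lambda>u. (u::'a, 0::'b)) Basis" "inj_on (\<lambda>v. (0::'a, v::'b)) Basis"
    by (auto intro!: inj_onI)
  then show ?thesis
    unfolding Basis_prod_def by (subst sum.union_disjoint) (auto simp: sum.reindex)
qed

lemma sum_Basis_vec_vec_real:
  fixes g :: "((real^'p) \<times> (real^'q)) \<times> real \<Rightarrow> real"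
  shows "(\<Sum>b\<in>Basis. g b) = (\<Sum>i\<in>UNIV. g ((axis i 1, 0), 0))
    + (\<Sum>j\<in>UNIV. g ((0, axis j 1), 0)) + g ((0, 0), 1)"
  by (simp add: sum_Basis_prod sum_Basis_vec zero_prod_def)

lemma norm_power6_prod:
  "(norm (((\<xi>::'a::real_normed_vector), (\<eta>::'b::real_normed_vector)), (t::real)))^6
    = (t^2 + ((norm \<xi>)^2 + (norm \<eta>)^2))^3"
proof -
  have "(norm ((\<xi>, \<eta>), t))^6 = ((norm ((\<xi>, \<eta>), t))^2)^3"
    by (simp add: power_mult[symmetric])
  then show ?thesis by (simp add: norm_Pair add.commute)
qed

section \<open>Symmetric multilinear forms\<close>

locale sym_4linear =
  fixes S :: "'a::real_vector \<Rightarrow> 'a \<Rightarrow> 'a \<Rightarrow> 'a \<Rightarrow> real"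
  assumes swap12: "S a b c d = S b a c d"
    and swap23: "S a b c d = S a c b d"
    and swap34: "S a b c d = S a b d c"
    and add1: "S (a + a') b c d = S a b c d + S a' b c d"
    and scaleR1: "S (r *\<^sub>R a) b c d = r * S a b c d"
begin

lemma add2: "S a (b + b') c d = S a b c d + S a b' c d"
  by (metis swap12 add1)

lemma add3: "S a b (c + c') d = S a b c d + S a b c' d"
  by (metis swap12 swap23 add1)

lemma add4: "S a b c (d + d') = S a b c d + S a b c d'"
  by (metis swap12 swap23 swap34 add1)

lemma scaleR2: "S a (r *\<^sub>R b) c d = r * S a b c d"
  by (metis swap12 scaleR1)

lemma scaleR3: "S a b (r *\<^sub>R c) d = r * S a b c d"
  by (metis swap12 swap23 scaleR1)

lemma scaleR4: "S a b c (r *\<^sub>R d) = r * S a b c d"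
  by (metis swap12 swap23 swap34 scaleR1)

lemma zero4: "S a b c 0 = 0"
  using scaleR4[of _ _ _ 0] by simp

lemmas multilinear = add1 add2 add3 add4 scaleR1 scaleR2 scaleR3 scaleR4

lemma expand4:
  "S (z + s *\<^sub>R v) (z + s *\<^sub>R v) (z + s *\<^sub>R v) (z + s *\<^sub>R v)
   = S z z z z + 4 * s * S v z z z + 6 * s^2 * S v v z z + 4 * s^3 * S v v v z + s^4 * S v v v v"
proof -
  have "S z v z z = S v z z z" "S z z v z = S v z z z" "S z z z v = S v z z z"
    "S v z v z = S v v z z" "S v z z v = S v v z z" "S z v v z = S v v z z"
    "S z v z v = S v v z z" "S z z v v = S v v z z"
    "S v v z v = S v v v z" "S v z v v = S v v v z" "S z v v v = S v v v z"
    by (metis swap12 swap23 swap34)+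
  then show ?thesis
    by (simp add: multilinear power2_eq_square power3_eq_cube power4_eq_xxxx algebra_simps)
qed

lemma expand3:
  "S w (z + s *\<^sub>R v) (z + s *\<^sub>R v) (z + s *\<^sub>R v)
   = S w z z z + 3 * s * S w v z z + 3 * s^2 * S w v v z + s^3 * S w v v v"
proof -
  have "S w z v z = S w v z z" "S w z z v = S w v z z"
    "S w v z v = S w v v z" "S w z v v = S w v v z"
    by (metis swap12 swap23 swap34)+
  then show ?thesis
    by (simp add: multilinear power2_eq_square power3_eq_cube algebra_simps)
qed

lemma expand2:
  "S (z + s *\<^sub>R v) (z + s *\<^sub>R v) c d = S z z c d + 2 * s * S v z c d + s^2 * S v v c d"
proof -
  have "S z v c d = S v z c d" by (metis swap12)
  then show ?thesis
    by (simp add: multilinear power2_eq_square algebra_simps)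
qed

end

definition quartic_tensor ::
    "('a::euclidean_space \<Rightarrow> 'a \<Rightarrow> 'a \<Rightarrow> 'a \<Rightarrow> real) \<Rightarrow> 'a \<Rightarrow> 'a \<Rightarrow> 'a \<Rightarrow> 'a \<Rightarrow> real" where
  "quartic_tensor C w1 w2 w3 w4 = (\<Sum>a\<in>Basis. \<Sum>b\<in>Basis. \<Sum>c\<in>Basis. \<Sum>d\<in>Basis.
     C a b c d * (w1 \<bullet> a) * (w2 \<bullet> b) * (w3 \<bullet> c) * (w4 \<bullet> d))"

lemma quartic_tensor_add:
  "quartic_tensor C (a + a') b c d = quartic_tensor C a b c d + quartic_tensor C a' b c d"
  "quartic_tensor C a (b + b') c d = quartic_tensor C a b c d + quartic_tensor C a b' c d"
  "quartic_tensor C a b (c + c') d = quartic_tensor C a b c d + quartic_tensor C a b c' d"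
  "quartic_tensor C a b c (d + d') = quartic_tensor C a b c d + quartic_tensor C a b c d'"
  by (simp_all add: quartic_tensor_def inner_add_left algebra_simps sum.distrib)

lemma quartic_tensor_scaleR:
  "quartic_tensor C (r *\<^sub>R a) b c d = r * quartic_tensor C a b c d"
  "quartic_tensor C a (r *\<^sub>R b) c d = r * quartic_tensor C a b c d"
  "quartic_tensor C a b (r *\<^sub>R c) d = r * quartic_tensor C a b c d"
  "quartic_tensor C a b c (r *\<^sub>R d) = r * quartic_tensor C a b c d"
  by (simp_all add: quartic_tensor_def sum_distrib_left algebra_simps)

definition symmetrize4 ::
    "('a \<Rightarrow> 'a \<Rightarrow> 'a \<Rightarrow> 'a \<Rightarrow> real) \<Rightarrow> 'a \<Rightarrow> 'a \<Rightarrow> 'a \<Rightarrow> 'a \<Rightarrow> real" where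
  "symmetrize4 T a b c d = (T a b c d + T a b d c + T a c b d + T a c d b + T a d b c + T a d c b
    + T b a c d + T b a d c + T b c a d + T b c d a + T b d a c + T b d c a
    + T c a b d + T c a d b + T c b a d + T c b d a + T c d a b + T c d b a
    + T d a b c + T d a c b + T d b a c + T d b c a + T d c a b + T d c b a) / 24"

lemma sym_4linear_symmetrize4_quartic_tensor: "sym_4linear (symmetrize4 (quartic_tensor C))"
  by unfold_locales
    (simp_all add: symmetrize4_def quartic_tensor_add quartic_tensor_scaleR field_simps)

lemma symmetrize4_diag: "symmetrize4 T z z z z = T z z z z"
  by (simp add: symmetrize4_def)

locale sym_3linear =
  fixes B :: "real^'n \<Rightarrow> real^'n \<Rightarrow> real^'n \<Rightarrow> real"
  assumes swap12: "B u v w = B v u w"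
    and swap23: "B u v w = B u w v"
    and add1: "B (u + u') v w = B u v w + B u' v w"
    and scaleR1: "B (r *\<^sub>R u) v w = r * B u v w"
begin

lemma add2: "B u (v + v') w = B u v w + B u v' w"
  by (metis swap12 add1)

lemma add3: "B u v (w + w') = B u v w + B u v w'"
  by (metis swap12 swap23 add1)

lemma scaleR2: "B u (r *\<^sub>R v) w = r * B u v w"
  by (metis swap12 scaleR1)

lemma scaleR3: "B u v (r *\<^sub>R w) = r * B u v w"
  by (metis swap12 swap23 scaleR1)

lemmas multilinear = add1 add2 add3 scaleR1 scaleR2 scaleR3

lemma linear_matrix_left: "linear (\<lambda>u. B (M *v u) v w)"
  by (rule linearI) (simp_all add: add1 scaleR1 matrix_vector_right_distrib matrix_vector_mult_scaleR)

lemma linear_second: "linear (\<lambda>v. B u v w)"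
  by (rule linearI) (simp_all add: add2 scaleR2)

lemma polarize:
  assumes h: "\<And>\<xi>. B (M *v \<xi>) \<xi> \<xi> = c * B \<xi> \<xi> \<xi>"
  shows "B (M *v u) v w + B (M *v v) u w + B (M *v w) u v = 3 * c * B u v w"
proof -
  have first_order: "B (M *v v) u u + 2 * B (M *v u) u v = 3 * c * B u u v" for u v
  proof -
    have p: "B (M *v u) v u = B (M *v u) u v" "B (M *v v) v u = B (M *v v) u v"
      "B u v u = B u u v" "B v u u = B u u v" "B v u v = B u v v" "B v v u = B u v v"
      by (metis swap12 swap23)+
    have "(B (M *v u) u u - c * B u u u) + (B (M *v v) u u + 2 * B (M *v u) u v - 3 * c * B u u v) * r
      + (B (M *v u) v v + 2 * B (M *v v) u v - 3 * c * B u v v) * r^2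
      + (B (M *v v) v v - c * B v v v) * r^3 + 0 * r^4 = 0" for r
      using h[of "u + r *\<^sub>R v"]
      by (simp add: multilinear p matrix_vector_right_distrib matrix_vector_mult_scaleR
          power2_eq_square power3_eq_cube algebra_simps)
    from real_poly4_coeffs_eq_0[OF this] show ?thesis by simp
  qed
  have p: "B (M *v v) w u = B (M *v v) u w" "B (M *v u) v w = B (M *v u) w v"
    "B u v w = B u w v" "B w u v = B u w v" "B (M *v w) v u = B (M *v w) u v"
    "B (M *v w) v w = B (M *v w) w v"
    by (metis swap12 swap23)+
  have "0 + (2 * B (M *v v) u w + 2 * B (M *v u) w v + 2 * B (M *v w) u v - 6 * c * B u w v) * r
      + (B (M *v v) w w + 2 * B (M *v w) w v - 3 * c * B w w v) * r^2 + 0 * r^3 + 0 * r^4 = 0" for r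
    using first_order[where u="u + r *\<^sub>R w" and v=v] first_order[where u=u and v=v]
    by (simp add: multilinear p matrix_vector_right_distrib matrix_vector_mult_scaleR
        power2_eq_square algebra_simps)
  from real_poly4_coeffs_eq_0[OF this] show ?thesis
    by (simp add: p)
qed

definition contraction :: "real^'n^'n \<Rightarrow> real^'n \<Rightarrow> real" where
  "contraction M y = (\<Sum>i\<in>UNIV. B (M *v axis i 1) (axis i 1) y)"

lemma sum_matrix_pair_contraction:
  "(\<Sum>i\<in>UNIV. B (M *v axis i 1) (N *v axis i 1) y) = contraction (M ** transpose N) y"
proof -
  have "(\<Sum>i\<in>UNIV. B (M *v axis i 1) (N *v axis i 1) y)
      = (\<Sum>i\<in>UNIV. \<Sum>l\<in>UNIV. N$l$i * B (M *v axis i 1) (axis l 1) y)"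
    by (rule sum.cong[OF refl], subst sum_axis_linear[OF linear_second, symmetric])
      (simp add: matrix_vector_mult_axis_nth)
  also have "\<dots> = (\<Sum>l\<in>UNIV. \<Sum>i\<in>UNIV. N$l$i * B (M *v axis i 1) (axis l 1) y)"
    by (rule sum.swap)
  also have "\<dots> = (\<Sum>l\<in>UNIV. B (M *v (transpose N *v axis l 1)) (axis l 1) y)"
    by (rule sum.cong[OF refl], subst sum_axis_linear[OF linear_matrix_left, symmetric])
      (simp add: matrix_vector_mult_axis_nth transpose_def)
  finally show ?thesis
    by (simp only: matrix_vector_mul_assoc contraction_def)
qed

end

locale sym_3linear_pencil = sym_3linear B for B :: "real^'n \<Rightarrow> real^'n \<Rightarrow> real^'n \<Rightarrow> real" +
  fixes M :: "real^'n^'n" and lam :: real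
  assumes M_symmetric: "transpose M = M"
    and M_cube: "M ** M ** M = lam *\<^sub>R M"
    and B_M_diag: "\<And>\<xi>. B (M *v \<xi>) \<xi> \<xi> = 0"
    and B_MM_diag: "\<And>\<xi>. B ((M ** M) *v \<xi>) \<xi> \<xi> = 2 / 3 * lam * B \<xi> \<xi> \<xi>"
begin

lemma B_M_polar: "B (M *v u) v w + B (M *v v) u w + B (M *v w) u v = 0"
  using polarize[of M 0] B_M_diag by simp

lemma B_MM_polar: "B ((M ** M) *v u) v w + B ((M ** M) *v v) u w + B ((M ** M) *v w) u v = 2 * lam * B u v w"
  using polarize[of "M ** M" "2 / 3 * lam", OF B_MM_diag] by simp

lemma swap_first_last: "B w u v = B u v w"
  by (metis swap12 swap23)

lemma contraction_identity: "contraction (mat 1) y = (\<Sum>i\<in>UNIV. B (axis i 1) (axis i 1) y)"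
  by (simp add: contraction_def)

lemma contraction_M_M: "(\<Sum>i\<in>UNIV. B (M *v axis i 1) (M *v axis i 1) y) = contraction (M ** M) y"
  by (simp add: sum_matrix_pair_contraction M_symmetric)

lemma contraction_MM_M: "(\<Sum>i\<in>UNIV. B ((M ** M) *v axis i 1) (M *v axis i 1) y) = lam * contraction M y"
  by (simp add: sum_matrix_pair_contraction M_symmetric M_cube contraction_def scaleR_matrix_vector_assoc[symmetric]
      scaleR1 sum_distrib_left)

text \<open>Contracting the polarized identities for \<open>M\<close> and \<open>M\<^sup>2\<close> against \<open>e\<^sub>i, e\<^sub>i\<close>, \<open>e\<^sub>i, M e\<^sub>i\<close>
  and \<open>M e\<^sub>i, M e\<^sub>i\<close> gives a linear system for the three contractions.\<close>

lemma contraction_eq1: "2 * contraction M y + contraction (mat 1) (M *v y) = 0"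
proof -
  have "(\<Sum>i\<in>UNIV. B (M *v axis i 1) (axis i 1) y + B (M *v axis i 1) (axis i 1) y
      + B (M *v y) (axis i 1) (axis i 1)) = 0"
    by (intro sum.neutral ballI B_M_polar)
  then show ?thesis
    by (simp add: contraction_def sum.distrib sum_distrib_left swap_first_last[of "M *v y"])
qed

lemma contraction_eq2: "2 * contraction (M ** M) y + contraction M (M *v y) = 0"
proof -
  have "(\<Sum>i\<in>UNIV. B (M *v (M *v axis i 1)) (axis i 1) y + B (M *v axis i 1) (M *v axis i 1) y
      + B (M *v y) (M *v axis i 1) (axis i 1)) = 0"
    by (intro sum.neutral ballI B_M_polar)
  then show ?thesis
    by (simp add: contraction_def sum.distrib swap_first_last[of "M *v y"] matrix_vector_mul_assoc
        contraction_M_M[unfolded contraction_def])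
qed

lemma contraction_eq3:
  "2 * contraction (M ** M) y + contraction (mat 1) ((M ** M) *v y) = 2 * lam * contraction (mat 1) y"
proof -
  have "(\<Sum>i\<in>UNIV. B ((M ** M) *v axis i 1) (axis i 1) y + B ((M ** M) *v axis i 1) (axis i 1) y
      + B ((M ** M) *v y) (axis i 1) (axis i 1)) = (\<Sum>i\<in>UNIV. 2 * lam * B (axis i 1) (axis i 1) y)"
    by (intro sum.cong refl B_MM_polar)
  then show ?thesis
    by (simp add: contraction_def sum.distrib sum_distrib_left swap_first_last[of "(M ** M) *v y"])
qed

lemma contraction_eq4: "2 * lam * contraction M y + contraction (M ** M) (M *v y) = 0"
proof -
  have "(\<Sum>i\<in>UNIV. B (M *v ((M ** M) *v axis i 1)) (axis i 1) y + B (M *v axis i 1) ((M ** M) *v axis i 1) y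
      + B (M *v y) ((M ** M) *v axis i 1) (axis i 1)) = 0"
    by (intro sum.neutral ballI B_M_polar)
  moreover have "M *v ((M ** M) *v v) = lam *\<^sub>R (M *v v)" for v
    by (simp add: matrix_vector_mul_assoc matrix_mul_assoc M_cube scaleR_matrix_vector_assoc)
  moreover have "B (M *v axis i 1) ((M ** M) *v axis i 1) y = B ((M ** M) *v axis i 1) (M *v axis i 1) y" for i
    by (metis swap12)
  ultimately show ?thesis
    by (simp add: contraction_def sum.distrib scaleR1 sum_distrib_left[symmetric]
        swap_first_last[of "M *v y"] contraction_MM_M[unfolded contraction_def])
qed

lemma contraction_eq5: "contraction (M ** M) ((M ** M) *v y) = 0"
proof -
  have "(\<Sum>i\<in>UNIV. B ((M ** M) *v (M *v axis i 1)) (M *v axis i 1) y + B ((M ** M) *v (M *v axis i 1)) (M *v axis i 1) y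
      + B ((M ** M) *v y) (M *v axis i 1) (M *v axis i 1)) = (\<Sum>i\<in>UNIV. 2 * lam * B (M *v axis i 1) (M *v axis i 1) y)"
    by (intro sum.cong refl B_MM_polar)
  moreover have "(M ** M) *v (M *v v) = lam *\<^sub>R (M *v v)" for v
    by (simp add: matrix_vector_mul_assoc M_cube scaleR_matrix_vector_assoc)
  ultimately have "(\<Sum>i\<in>UNIV. B (M *v axis i 1) (M *v axis i 1) ((M ** M) *v y)) = 0"
    by (simp add: sum.distrib scaleR1 sum_distrib_left[symmetric] swap_first_last[of "(M ** M) *v y"])
  then show ?thesis
    using contraction_M_M by simp
qed

lemma trace_contraction_eq_0:
  assumes "lam \<noteq> 0"
  shows "(\<Sum>i\<in>UNIV. B (axis i 1) (axis i 1) x) = 0"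
proof -
  have "contraction M (M *v x) = 0"
    using contraction_eq4[of "M *v x"] contraction_eq5[of x] assms by (simp add: matrix_vector_mul_assoc)
  then have "contraction (M ** M) x = 0" and "contraction (mat 1) ((M ** M) *v x) = 0"
    using contraction_eq2[of x] contraction_eq1[of "M *v x"] by (simp_all add: matrix_vector_mul_assoc)
  then show ?thesis
    using contraction_eq3[of x] assms by (simp add: contraction_identity)
qed

end

section \<open>The quartic and its eikonal equation\<close>

locale eikonal_quartic =
  fixes f :: "((real^'p) \<times> (real^'q)) \<times> real \<Rightarrow> real"
    and \<theta> :: "(real^'p) \<times> (real^'q) \<Rightarrow> real"
    and A :: "'q \<Rightarrow> real^'p^'p"
    and \<nu> :: nat
    and C :: "(real^'p) \<times> (real^'q) \<Rightarrow> (real^'p) \<times> (real^'q) \<Rightarrow> (real^'p) \<times> (real^'q) \<Rightarrow> (real^'p) \<times> (real^'q) \<Rightarrow> real"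
  assumes A_symmetric: "\<And>i. transpose (A i) = A i"
    and A_similar: "\<And>\<eta>. \<eta> \<noteq> 0 \<Longrightarrow> similar_to_signed_diag (\<Sum>i\<in>UNIV. (\<eta> $ i) *\<^sub>R A i) (norm \<eta>) \<nu>"
    and \<theta>_tensor: "\<And>z. \<theta> z = quartic_tensor C z z z z"
    and f_form: "\<And>\<xi> \<eta> t. f ((\<xi>, \<eta>), t) = t ^ 4 + 2 * ((norm \<xi>)\<^sup>2 - 3 * (norm \<eta>)\<^sup>2) * t\<^sup>2
      + 8 * (\<xi> \<bullet> ((\<Sum>i\<in>UNIV. (\<eta> $ i) *\<^sub>R A i) *v \<xi>)) * t + \<theta> (\<xi>, \<eta>)"
    and eikonal: "\<And>x. grad_sq f x = 16 * (norm x) ^ 6"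
begin

definition pencil :: "real^'q \<Rightarrow> real^'p^'p" where
  "pencil \<eta> = (\<Sum>i\<in>UNIV. (\<eta> $ i) *\<^sub>R A i)"

text \<open>The vector \<open>\<psi>(\<xi>,\<cdot>)\<close>, i.e.\ \<open>\<psi>(\<xi>,\<eta>) = \<eta> \<bullet> psi_vec \<xi>\<close>.\<close>
definition psi_vec :: "real^'p \<Rightarrow> real^'q" where
  "psi_vec \<xi> = (\<chi> j. \<xi> \<bullet> (A j *v \<xi>))"

definition polar where
  "polar = symmetrize4 (quartic_tensor C)"

sublocale polar: sym_4linear polar
  unfolding polar_def by (rule sym_4linear_symmetrize4_quartic_tensor)

lemma f_polar:
  "f ((\<xi>, \<eta>), t) = t^4 + 2 * ((norm \<xi>)^2 - 3 * (norm \<eta>)^2) * t^2 + 8 * (\<xi> \<bullet> (pencil \<eta> *v \<xi>)) * t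
    + polar (\<xi>, \<eta>) (\<xi>, \<eta>) (\<xi>, \<eta>) (\<xi>, \<eta>)"
  using f_form by (simp add: pencil_def polar_def symmetrize4_diag \<theta>_tensor)

lemma pencil_add_scaleR: "pencil (\<eta> + s *\<^sub>R e) = pencil \<eta> + s *\<^sub>R pencil e"
  by (simp add: pencil_def algebra_simps sum.distrib scaleR_sum_right)

lemma pencil_axis: "pencil (axis j 1) = A j"
  by (simp add: pencil_def axis_def if_distrib[of "\<lambda>x. x *\<^sub>R _"] cong: if_cong)

lemma pencil_symmetric: "transpose (pencil \<eta>) = pencil \<eta>"
  by (simp add: pencil_def transpose_def vec_eq_iff symmetric_matrix_nth[OF A_symmetric])

lemma
  shows trace_pencil: "trace (pencil \<eta>) = 0"
    and cube_pencil: "pencil \<eta> ** pencil \<eta> ** pencil \<eta> = (norm \<eta>)^2 *\<^sub>R pencil \<eta>"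
    and trace_square_pencil: "trace (pencil \<eta> ** pencil \<eta>) = (norm \<eta>)^2 * (2 * real \<nu>)"
proof -
  have "trace (pencil \<eta>) = 0 \<and> pencil \<eta> ** pencil \<eta> ** pencil \<eta> = (norm \<eta>)^2 *\<^sub>R pencil \<eta>
    \<and> trace (pencil \<eta> ** pencil \<eta>) = (norm \<eta>)^2 * (2 * real \<nu>)"
  proof (cases "\<eta> = 0")
    case True
    then show ?thesis by (simp add: pencil_def trace_def)
  next
    case False
    note similar = A_similar[OF False, folded pencil_def]
    show ?thesis
      using trace_similar_to_signed_diag[OF similar] cube_similar_to_signed_diag[OF similar]
        trace_square_similar_to_signed_diag[OF similar] by simp
  qed
  then show "trace (pencil \<eta>) = 0" "pencil \<eta> ** pencil \<eta> ** pencil \<eta> = (norm \<eta>)^2 *\<^sub>R pencil \<eta>"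
    "trace (pencil \<eta> ** pencil \<eta>) = (norm \<eta>)^2 * (2 * real \<nu>)"
    by auto
qed

lemma trace_A: "trace (A j) = 0"
  using trace_pencil[of "axis j 1"] by (simp add: pencil_axis)

lemma f_shift_xi:
  "f ((\<xi> + s *\<^sub>R e, \<eta>), t) = f ((\<xi>, \<eta>), t)
   + (4 * t^2 * (\<xi> \<bullet> e) + 8 * t * (\<xi> \<bullet> (pencil \<eta> *v e) + e \<bullet> (pencil \<eta> *v \<xi>)) + 4 * polar (e, 0) (\<xi>, \<eta>) (\<xi>, \<eta>) (\<xi>, \<eta>)) * s
   + (2 * t^2 * (e \<bullet> e) + 8 * t * (e \<bullet> (pencil \<eta> *v e)) + 6 * polar (e, 0) (e, 0) (\<xi>, \<eta>) (\<xi>, \<eta>)) * s^2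
   + (4 * polar (e, 0) (e, 0) (e, 0) (\<xi>, \<eta>)) * s^3 + polar (e, 0) (e, 0) (e, 0) (e, 0) * s^4"
proof -
  have shift: "(\<xi> + s *\<^sub>R e, \<eta>) = (\<xi>, \<eta>) + s *\<^sub>R (e, 0)" by simp
  show ?thesis
    unfolding f_polar
    unfolding shift polar.expand4 norm_add_scaleR_power2
    by (simp add: matrix_vector_right_distrib matrix_vector_mult_scaleR inner_add_left inner_add_right
        algebra_simps power2_eq_square)
qed

lemma f_shift_eta:
  "f ((\<xi>, \<eta> + s *\<^sub>R e), t) = f ((\<xi>, \<eta>), t)
   + (-12 * t^2 * (\<eta> \<bullet> e) + 8 * t * (\<xi> \<bullet> (pencil e *v \<xi>)) + 4 * polar (0, e) (\<xi>, \<eta>) (\<xi>, \<eta>) (\<xi>, \<eta>)) * s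
   + (-6 * t^2 * (e \<bullet> e) + 6 * polar (0, e) (0, e) (\<xi>, \<eta>) (\<xi>, \<eta>)) * s^2
   + (4 * polar (0, e) (0, e) (0, e) (\<xi>, \<eta>)) * s^3 + polar (0, e) (0, e) (0, e) (0, e) * s^4"
proof -
  have shift: "(\<xi>, \<eta> + s *\<^sub>R e) = (\<xi>, \<eta>) + s *\<^sub>R (0, e)" by simp
  show ?thesis
    unfolding f_polar
    unfolding shift polar.expand4 norm_add_scaleR_power2 pencil_add_scaleR
    by (simp add: matrix_vector_mult_add_rdistrib scaleR_matrix_vector_assoc[symmetric] inner_add_left
        inner_add_right algebra_simps power2_eq_square)
qed

lemma f_shift_t:
  "f ((\<xi>, \<eta>), t + s) = f ((\<xi>, \<eta>), t)
   + (4 * t^3 + 4 * ((norm \<xi>)^2 - 3 * (norm \<eta>)^2) * t + 8 * (\<xi> \<bullet> (pencil \<eta> *v \<xi>))) * s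
   + (6 * t^2 + 2 * ((norm \<xi>)^2 - 3 * (norm \<eta>)^2)) * s^2 + (4 * t) * s^3 + 1 * s^4"
  unfolding f_polar by (simp add: power2_eq_square power3_eq_cube power4_eq_xxxx algebra_simps)

lemma
  fixes e :: "real^'p" and e' :: "real^'q"
  shows shift_xi: "((\<xi>, \<eta>), t) + s *\<^sub>R ((e, 0), 0) = ((\<xi> + s *\<^sub>R e, \<eta>), t)"
    and shift_eta: "((\<xi>, \<eta>), t) + s *\<^sub>R ((0, e'), 0) = ((\<xi>, \<eta> + s *\<^sub>R e'), t)"
    and shift_t: "((\<xi>, \<eta>), t) + s *\<^sub>R ((0, 0), 1) = ((\<xi>, \<eta>), t + s)"
  by simp_all

lemma grad_sq_f:
  "grad_sq f ((\<xi>, \<eta>), t) =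
    (\<Sum>i\<in>UNIV. (4 * (\<xi>$i) * t^2 + 16 * ((pencil \<eta> *v \<xi>)$i) * t + 4 * polar (axis i 1, 0) (\<xi>, \<eta>) (\<xi>, \<eta>) (\<xi>, \<eta>))^2)
  + (\<Sum>j\<in>UNIV. (-12 * (\<eta>$j) * t^2 + 8 * (\<xi> \<bullet> (A j *v \<xi>)) * t + 4 * polar (0, axis j 1) (\<xi>, \<eta>) (\<xi>, \<eta>) (\<xi>, \<eta>))^2)
  + (4 * t^3 + 4 * ((norm \<xi>)^2 - 3 * (norm \<eta>)^2) * t + 8 * (\<xi> \<bullet> (pencil \<eta> *v \<xi>)))^2"
proof -
  note d = deriv_quartic_at_0(1)
  have "\<xi> \<bullet> (pencil \<eta> *v axis i 1) = (pencil \<eta> *v \<xi>) $ i" for i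
    using inner_symmetric_matrix[OF pencil_symmetric] by (simp add: inner_axis)
  then show ?thesis
    unfolding grad_sq_def sum_Basis_vec_vec_real shift_xi shift_eta shift_t
      d[OF f_shift_xi] d[OF f_shift_eta] d[OF f_shift_t]
    by (simp add: inner_axis inner_axis' pencil_axis algebra_simps)
qed

lemma laplacian_f_expand:
  "laplacian f ((\<xi>, \<eta>), t) =
    (\<Sum>i\<in>UNIV. 2 * (2 * t^2 + 8 * t * (axis i 1 \<bullet> (pencil \<eta> *v axis i 1)) + 6 * polar (axis i 1, 0) (axis i 1, 0) (\<xi>, \<eta>) (\<xi>, \<eta>)))
  + (\<Sum>j\<in>UNIV. 2 * (-6 * t^2 + 6 * polar (0, axis j 1) (0, axis j 1) (\<xi>, \<eta>) (\<xi>, \<eta>)))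
  + 2 * (6 * t^2 + 2 * ((norm \<xi>)^2 - 3 * (norm \<eta>)^2))"
  using deriv_quartic_at_0(2)[OF f_shift_xi] deriv_quartic_at_0(2)[OF f_shift_eta]
    deriv_quartic_at_0(2)[OF f_shift_t]
  unfolding laplacian_def sum_Basis_vec_vec_real shift_xi shift_eta shift_t
  by (simp add: inner_axis)

lemma sum_axis_polar_xi: "(\<Sum>i\<in>UNIV. v$i * polar (axis i 1, 0) b c d) = polar (v, 0) b c d"
proof (rule sum_axis_linear)
  show "linear (\<lambda>v. polar (v, 0) b c d)"
    by (rule linearI) (simp_all add: polar.add1[symmetric] polar.scaleR1[symmetric])
qed

lemma sum_axis_polar_eta: "(\<Sum>j\<in>UNIV. v$j * polar (0, axis j 1) b c d) = polar (0, v) b c d"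
proof (rule sum_axis_linear)
  show "linear (\<lambda>v. polar (0, v) b c d)"
    by (rule linearI) (simp_all add: polar.add1[symmetric] polar.scaleR1[symmetric])
qed

lemma psi_vec_scaleR: "psi_vec (s *\<^sub>R \<xi>) = s^2 *\<^sub>R psi_vec \<xi>"
  by (simp add: psi_vec_def vec_eq_iff matrix_vector_mult_scaleR power2_eq_square)

lemma eikonal_polynomial_in_t:
  fixes \<xi> :: "real^'p" and \<eta> :: "real^'q"
  defines "z \<equiv> (\<xi>, \<eta>)"
  shows "(\<Sum>i\<in>UNIV. (4 * (\<xi>$i) * t^2 + 16 * ((pencil \<eta> *v \<xi>)$i) * t + 4 * polar (axis i 1, 0) z z z)^2)
    + (\<Sum>j\<in>UNIV. (-12 * (\<eta>$j) * t^2 + 8 * (\<xi> \<bullet> (A j *v \<xi>)) * t + 4 * polar (0, axis j 1) z z z)^2)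
    + (4 * t^3 + 4 * ((norm \<xi>)^2 - 3 * (norm \<eta>)^2) * t + 8 * (\<xi> \<bullet> (pencil \<eta> *v \<xi>)))^2
    = 16 * (t^2 + ((norm \<xi>)^2 + (norm \<eta>)^2))^3"
  using eikonal[of "((\<xi>, \<eta>), t)"] unfolding grad_sq_f norm_power6_prod z_def by simp

lemma eikonal_coeff_t2:
  fixes \<xi> :: "real^'p" and \<eta> :: "real^'q"
  defines "z \<equiv> (\<xi>, \<eta>)"
  shows "256 * (norm (pencil \<eta> *v \<xi>))^2 + 32 * polar (\<xi>, 0) z z z + 64 * (norm (psi_vec \<xi>))^2
    - 96 * polar (0, \<eta>) z z z + (4 * ((norm \<xi>)^2 - 3 * (norm \<eta>)^2))^2 = 48 * ((norm \<xi>)^2 + (norm \<eta>)^2)^2"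
proof -
  have "(\<Sum>i\<in>UNIV. (16 * ((pencil \<eta> *v \<xi>)$i))^2 + 2 * (4 * (\<xi>$i)) * (4 * polar (axis i 1, 0) z z z))
      = (\<Sum>i\<in>UNIV. 256 * ((pencil \<eta> *v \<xi>)$i)^2 + 32 * ((\<xi>$i) * polar (axis i 1, 0) z z z))"
    by (intro sum.cong refl) (simp add: power2_eq_square)
  also have "\<dots> = 256 * (norm (pencil \<eta> *v \<xi>))^2 + 32 * polar (\<xi>, 0) z z z"
    by (simp add: sum.distrib sum_distrib_left[symmetric] norm_power2_vec_sum sum_axis_polar_xi)
  moreover have "(\<Sum>j\<in>UNIV. (8 * (\<xi> \<bullet> (A j *v \<xi>)))^2 + 2 * (-12 * (\<eta>$j)) * (4 * polar (0, axis j 1) z z z))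
      = (\<Sum>j\<in>UNIV. 64 * (\<xi> \<bullet> (A j *v \<xi>))^2 - 96 * ((\<eta>$j) * polar (0, axis j 1) z z z))"
    by (intro sum.cong refl) (simp add: power2_eq_square)
  moreover have "\<dots> = 64 * (norm (psi_vec \<xi>))^2 - 96 * polar (0, \<eta>) z z z"
    by (simp add: sum_subtractf sum_distrib_left[symmetric] norm_power2_vec_sum psi_vec_def sum_axis_polar_eta)
  ultimately show ?thesis
    using sum_squares_eq_cube_coeffs(1)[OF eikonal_polynomial_in_t[where \<xi>=\<xi> and \<eta>=\<eta>]] unfolding z_def by simp
qed

lemma eikonal_coeff_t1:
  fixes \<xi> :: "real^'p" and \<eta> :: "real^'q"
  defines "z \<equiv> (\<xi>, \<eta>)"
  shows "128 * polar (pencil \<eta> *v \<xi>, 0) z z z + 64 * polar (0, psi_vec \<xi>) z z z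
    + 2 * (4 * ((norm \<xi>)^2 - 3 * (norm \<eta>)^2)) * (8 * (\<xi> \<bullet> (pencil \<eta> *v \<xi>))) = 0"
proof -
  have "(\<Sum>i\<in>UNIV. (16 * ((pencil \<eta> *v \<xi>)$i)) * (4 * polar (axis i 1, 0) z z z))
      = (\<Sum>i\<in>UNIV. 64 * (((pencil \<eta> *v \<xi>)$i) * polar (axis i 1, 0) z z z))"
    by (intro sum.cong refl) simp
  also have "\<dots> = 64 * polar (pencil \<eta> *v \<xi>, 0) z z z"
    by (simp only: sum_distrib_left[symmetric] sum_axis_polar_xi)
  moreover have "(\<Sum>j\<in>UNIV. (8 * (\<xi> \<bullet> (A j *v \<xi>))) * (4 * polar (0, axis j 1) z z z))
      = (\<Sum>j\<in>UNIV. 32 * ((psi_vec \<xi> $ j) * polar (0, axis j 1) z z z))"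
    by (intro sum.cong refl) (simp add: psi_vec_def)
  moreover have "\<dots> = 32 * polar (0, psi_vec \<xi>) z z z"
    by (simp only: sum_distrib_left[symmetric] sum_axis_polar_eta)
  ultimately show ?thesis
    using sum_squares_eq_cube_coeffs(2)[OF eikonal_polynomial_in_t[where \<xi>=\<xi> and \<eta>=\<eta>]] unfolding z_def by simp
qed

lemma eikonal_coeff_t0:
  fixes \<xi> :: "real^'p" and \<eta> :: "real^'q"
  defines "z \<equiv> (\<xi>, \<eta>)"
  shows "16 * (\<Sum>i\<in>UNIV. (polar (axis i 1, 0) z z z)^2) + 16 * (\<Sum>j\<in>UNIV. (polar (0, axis j 1) z z z)^2)
    + (8 * (\<xi> \<bullet> (pencil \<eta> *v \<xi>)))^2 = 16 * ((norm \<xi>)^2 + (norm \<eta>)^2)^3"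
  using sum_squares_eq_cube_coeffs(3)[OF eikonal_polynomial_in_t[where \<xi>=\<xi> and \<eta>=\<eta>]] unfolding z_def
  by (simp add: sum_distrib_left power_mult_distrib)

end

section \<open>The polar form of \<open>\<theta>\<close>\<close>

context eikonal_quartic
begin

lemma polar_expand_scaled_xi:
  "polar w (s *\<^sub>R \<xi>, \<eta>) (s *\<^sub>R \<xi>, \<eta>) (s *\<^sub>R \<xi>, \<eta>)
   = polar w (0, \<eta>) (0, \<eta>) (0, \<eta>) + 3 * s * polar w (\<xi>, 0) (0, \<eta>) (0, \<eta>)
     + 3 * s^2 * polar w (\<xi>, 0) (\<xi>, 0) (0, \<eta>) + s^3 * polar w (\<xi>, 0) (\<xi>, 0) (\<xi>, 0)"
proof -
  have "(s *\<^sub>R \<xi>, \<eta>) = (0, \<eta>) + s *\<^sub>R (\<xi>, 0)" by simp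
  then show ?thesis by (simp only: polar.expand3)
qed

text \<open>Replacing \<open>\<xi>\<close> by \<open>s \<xi>\<close> in the \<open>t\<^sup>2\<close>-coefficient of the eikonal equation and comparing
  coefficients of \<open>s\<close> determines \<open>\<theta>\<close> on the blocks.\<close>
lemma
  fixes \<xi> :: "real^'p" and \<eta> :: "real^'q"
  shows polar_xi4: "polar (\<xi>, 0) (\<xi>, 0) (\<xi>, 0) (\<xi>, 0) = (norm \<xi>)^4 - 2 * (norm (psi_vec \<xi>))^2"
    and polar_xi2_eta2: "polar (\<xi>, 0) (\<xi>, 0) (0, \<eta>) (0, \<eta>) = 4/3 * (norm (pencil \<eta> *v \<xi>))^2 - (norm \<xi>)^2 * (norm \<eta>)^2"
    and polar_xi_eta3: "polar (\<xi>, 0) (0, \<eta>) (0, \<eta>) (0, \<eta>) = 0"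
    and polar_eta4: "polar (0, \<eta>) (0, \<eta>) (0, \<eta>) (0, \<eta>) = (norm \<eta>)^4"
proof -
  define X where "X = ((\<xi>, 0) :: (real^'p) \<times> (real^'q))"
  define Y where "Y = ((0, \<eta>) :: (real^'p) \<times> (real^'q))"
  define u where "u = (norm \<xi>)^2"
  define w where "w = (norm \<eta>)^2"
  have swaps: "polar Y X Y Y = polar X Y Y Y" "polar Y X X Y = polar X X Y Y" "polar Y X X X = polar X X X Y"
    by (metis polar.swap12 polar.swap23 polar.swap34)+
  have "(-96 * polar Y Y Y Y + 96 * w^2) + (-256 * polar X Y Y Y) * s
     + (256 * (norm (pencil \<eta> *v \<xi>))^2 - 192 * polar X X Y Y - 192 * u * w) * s^2 + 0 * s^3
     + (32 * polar X X X X + 64 * (norm (psi_vec \<xi>))^2 - 32 * u^2) * s^4 = 0" for s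
  proof -
    have "(s *\<^sub>R \<xi>, (0::real^'q)) = s *\<^sub>R X" by (simp add: X_def)
    then have "polar (s *\<^sub>R \<xi>, 0) (s *\<^sub>R \<xi>, \<eta>) (s *\<^sub>R \<xi>, \<eta>) (s *\<^sub>R \<xi>, \<eta>)
       = s * (polar X Y Y Y + 3 * s * polar X X Y Y + 3 * s^2 * polar X X X Y + s^3 * polar X X X X)"
      unfolding polar_expand_scaled_xi X_def[symmetric] Y_def[symmetric]
      by (simp add: polar.scaleR1 algebra_simps)
    moreover have "polar (0, \<eta>) (s *\<^sub>R \<xi>, \<eta>) (s *\<^sub>R \<xi>, \<eta>) (s *\<^sub>R \<xi>, \<eta>)
       = polar Y Y Y Y + 3 * s * polar X Y Y Y + 3 * s^2 * polar X X Y Y + s^3 * polar X X X Y"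
      unfolding polar_expand_scaled_xi X_def[symmetric] Y_def[symmetric] swaps ..
    moreover have "(norm (psi_vec (s *\<^sub>R \<xi>)))^2 = s^4 * (norm (psi_vec \<xi>))^2"
      by (simp add: psi_vec_scaleR power_mult_distrib power_mult[symmetric])
    ultimately show ?thesis
      using eikonal_coeff_t2[where \<xi>="s *\<^sub>R \<xi>" and \<eta>=\<eta>] unfolding u_def w_def
      by (simp add: matrix_vector_mult_scaleR power_mult_distrib power2_eq_square power3_eq_cube
          power4_eq_xxxx algebra_simps)
  qed
  from real_poly4_coeffs_eq_0[OF this]
  have "polar Y Y Y Y = w^2" "polar X Y Y Y = 0"
    "polar X X Y Y = 4/3 * (norm (pencil \<eta> *v \<xi>))^2 - u * w"
    "polar X X X X = u^2 - 2 * (norm (psi_vec \<xi>))^2"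
    by auto
  then show "polar (\<xi>, 0) (\<xi>, 0) (\<xi>, 0) (\<xi>, 0) = (norm \<xi>)^4 - 2 * (norm (psi_vec \<xi>))^2"
    and "polar (\<xi>, 0) (\<xi>, 0) (0, \<eta>) (0, \<eta>) = 4/3 * (norm (pencil \<eta> *v \<xi>))^2 - (norm \<xi>)^2 * (norm \<eta>)^2"
    and "polar (\<xi>, 0) (0, \<eta>) (0, \<eta>) (0, \<eta>) = 0"
    and "polar (0, \<eta>) (0, \<eta>) (0, \<eta>) (0, \<eta>) = (norm \<eta>)^4"
    unfolding X_def Y_def u_def w_def by (simp_all add: power_mult[symmetric])
qed

lemma polar_xi_eta3_polarized:
  fixes \<xi> :: "real^'p" and v \<eta> :: "real^'q"
  shows "polar (\<xi>, 0) (0, v) (0, \<eta>) (0, \<eta>) = 0" and "polar (\<xi>, 0) (0, v) (0, v) (0, \<eta>) = 0"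
proof -
  have "0 + (3 * polar (\<xi>, 0) (0, v) (0, \<eta>) (0, \<eta>)) * r + (3 * polar (\<xi>, 0) (0, v) (0, v) (0, \<eta>)) * r^2
      + polar (\<xi>, 0) (0, v) (0, v) (0, v) * r^3 + 0 * r^4 = 0" for r
  proof -
    have "(0::real^'p, \<eta> + r *\<^sub>R v) = (0, \<eta>) + r *\<^sub>R (0, v)" by simp
    then have "polar (\<xi>, 0) ((0, \<eta>) + r *\<^sub>R (0, v)) ((0, \<eta>) + r *\<^sub>R (0, v)) ((0, \<eta>) + r *\<^sub>R (0, v)) = 0"
      using polar_xi_eta3[of \<xi> "\<eta> + r *\<^sub>R v"] by metis
    then show ?thesis
      unfolding polar.expand3 polar_xi_eta3 by (simp add: algebra_simps)
  qed
  from real_poly4_coeffs_eq_0[OF this]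
  show "polar (\<xi>, 0) (0, v) (0, \<eta>) (0, \<eta>) = 0" and "polar (\<xi>, 0) (0, v) (0, v) (0, \<eta>) = 0"
    by auto
qed

lemma polar_xi2_eta2_polarized:
  fixes \<xi> e :: "real^'p" and \<eta> :: "real^'q"
  shows "polar (e, 0) (\<xi>, 0) (0, \<eta>) (0, \<eta>) = 4/3 * ((pencil \<eta> *v \<xi>) \<bullet> (pencil \<eta> *v e)) - (\<xi> \<bullet> e) * (norm \<eta>)^2"
proof -
  have "0 + (2 * polar (e, 0) (\<xi>, 0) (0, \<eta>) (0, \<eta>) - 8/3 * ((pencil \<eta> *v \<xi>) \<bullet> (pencil \<eta> *v e))
      + 2 * (\<xi> \<bullet> e) * (norm \<eta>)^2) * r
      + (polar (e, 0) (e, 0) (0, \<eta>) (0, \<eta>) - 4/3 * (norm (pencil \<eta> *v e))^2 + (e \<bullet> e) * (norm \<eta>)^2) * r^2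
      + 0 * r^3 + 0 * r^4 = 0" for r
  proof -
    have "(\<xi> + r *\<^sub>R e, 0::real^'q) = (\<xi>, 0) + r *\<^sub>R (e, 0)" by simp
    then have "polar ((\<xi>, 0) + r *\<^sub>R (e, 0)) ((\<xi>, 0) + r *\<^sub>R (e, 0)) (0, \<eta>) (0, \<eta>)
       = 4/3 * (norm (pencil \<eta> *v \<xi> + r *\<^sub>R (pencil \<eta> *v e)))^2 - (norm (\<xi> + r *\<^sub>R e))^2 * (norm \<eta>)^2"
      using polar_xi2_eta2[of "\<xi> + r *\<^sub>R e" \<eta>]
      by (simp add: matrix_vector_right_distrib matrix_vector_mult_scaleR)
    then show ?thesis
      unfolding polar.expand2 norm_add_scaleR_power2 polar_xi2_eta2
      by (simp add: algebra_simps power2_norm_eq_inner)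
  qed
  from real_poly4_coeffs_eq_0[OF this] show ?thesis by simp
qed

lemma polar_eta4_polarized:
  fixes e \<eta> :: "real^'q"
  shows "polar (0, e) (0, \<eta>) (0, \<eta>) (0, \<eta>) = (\<eta> \<bullet> e) * (norm \<eta>)^2"
    and "polar (0, e) (0, e) (0, \<eta>) (0, \<eta>) = (2 * (norm \<eta>)^2 * (e \<bullet> e) + 4 * (\<eta> \<bullet> e)^2) / 6"
proof -
  have "0 + (4 * polar (0, e) (0, \<eta>) (0, \<eta>) (0, \<eta>) - 4 * (\<eta> \<bullet> e) * (norm \<eta>)^2) * r
      + (6 * polar (0, e) (0, e) (0, \<eta>) (0, \<eta>) - (2 * (norm \<eta>)^2 * (e \<bullet> e) + 4 * (\<eta> \<bullet> e)^2)) * r^2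
      + (4 * polar (0, e) (0, e) (0, e) (0, \<eta>) - 4 * (\<eta> \<bullet> e) * (e \<bullet> e)) * r^3
      + (polar (0, e) (0, e) (0, e) (0, e) - (e \<bullet> e)^2) * r^4 = 0" for r
  proof -
    have "(0::real^'p, \<eta> + r *\<^sub>R e) = (0, \<eta>) + r *\<^sub>R (0, e)" by simp
    then have "polar ((0, \<eta>) + r *\<^sub>R (0, e)) ((0, \<eta>) + r *\<^sub>R (0, e)) ((0, \<eta>) + r *\<^sub>R (0, e)) ((0, \<eta>) + r *\<^sub>R (0, e))
       = ((norm (\<eta> + r *\<^sub>R e))^2)^2"
      using polar_eta4[of "\<eta> + r *\<^sub>R e"] by (simp add: power_mult[symmetric])
    then show ?thesis
      unfolding polar.expand4 norm_add_scaleR_power2 polar_eta4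
      by (simp add: power2_eq_square power3_eq_cube power4_eq_xxxx algebra_simps)
  qed
  from real_poly4_coeffs_eq_0[OF this]
  show "polar (0, e) (0, \<eta>) (0, \<eta>) (0, \<eta>) = (\<eta> \<bullet> e) * (norm \<eta>)^2"
    and "polar (0, e) (0, e) (0, \<eta>) (0, \<eta>) = (2 * (norm \<eta>)^2 * (e \<bullet> e) + 4 * (\<eta> \<bullet> e)^2) / 6"
    by auto
qed

lemma polar_xi4_polarized:
  fixes \<xi> e :: "real^'p"
  shows "6 * polar (e, 0) (e, 0) (\<xi>, 0) (\<xi>, 0) = 4 * (\<xi> \<bullet> e)^2 + 2 * (norm \<xi>)^2 * (e \<bullet> e)
     - 2 * (\<Sum>j\<in>UNIV. (\<xi> \<bullet> (A j *v e) + e \<bullet> (A j *v \<xi>))^2 + 2 * (e \<bullet> (A j *v e)) * (\<xi> \<bullet> (A j *v \<xi>)))"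
proof -
  define a where "a j = e \<bullet> (A j *v e)" for j
  define b where "b j = \<xi> \<bullet> (A j *v e) + e \<bullet> (A j *v \<xi>)" for j
  define c where "c j = \<xi> \<bullet> (A j *v \<xi>)" for j
  define u where "u = (norm \<xi>)^2"
  define m where "m = \<xi> \<bullet> e"
  define n where "n = e \<bullet> e"
  have "(polar (\<xi>, 0) (\<xi>, 0) (\<xi>, 0) (\<xi>, 0) - u^2 + 2 * (\<Sum>j\<in>UNIV. (c j)^2))
     + (4 * polar (e, 0) (\<xi>, 0) (\<xi>, 0) (\<xi>, 0) - 4 * u * m + 4 * (\<Sum>j\<in>UNIV. b j * c j)) * r
     + (6 * polar (e, 0) (e, 0) (\<xi>, 0) (\<xi>, 0) - (4 * m^2 + 2 * u * n) + 2 * (\<Sum>j\<in>UNIV. (b j)^2 + 2 * a j * c j)) * r^2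
     + (4 * polar (e, 0) (e, 0) (e, 0) (\<xi>, 0) - 4 * m * n + 4 * (\<Sum>j\<in>UNIV. a j * b j)) * r^3
     + (polar (e, 0) (e, 0) (e, 0) (e, 0) - n^2 + 2 * (\<Sum>j\<in>UNIV. (a j)^2)) * r^4 = 0" for r
  proof -
    have shift: "(\<xi> + r *\<^sub>R e, 0::real^'q) = (\<xi>, 0) + r *\<^sub>R (e, 0)" by simp
    have psi: "(norm (psi_vec (\<xi> + r *\<^sub>R e)))^2 = (\<Sum>j\<in>UNIV. (a j * r^2 + b j * r + c j)^2)"
      unfolding norm_power2_vec_sum
      by (intro sum.cong refl) (simp add: psi_vec_def a_def b_def c_def matrix_vector_right_distrib
          matrix_vector_mult_scaleR inner_add_left inner_add_right algebra_simps power2_eq_square)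
    have "polar ((\<xi>, 0) + r *\<^sub>R (e, 0)) ((\<xi>, 0) + r *\<^sub>R (e, 0)) ((\<xi>, 0) + r *\<^sub>R (e, 0)) ((\<xi>, 0) + r *\<^sub>R (e, 0))
       = ((norm (\<xi> + r *\<^sub>R e))^2)^2 - 2 * (norm (psi_vec (\<xi> + r *\<^sub>R e)))^2"
      using polar_xi4[of "\<xi> + r *\<^sub>R e"] unfolding shift by (simp add: power_mult[symmetric])
    then show ?thesis
      unfolding polar.expand4 norm_add_scaleR_power2 psi sum_power2_quadratic polar_xi4
        u_def[symmetric] m_def[symmetric] n_def[symmetric]
      by (simp add: power2_eq_square power3_eq_cube power4_eq_xxxx algebra_simps)
  qed
  from real_poly4_coeffs_eq_0[OF this] show ?thesis
    by (simp add: a_def b_def c_def u_def m_def n_def)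
qed

lemma sum_polar_axis_xi2_xi2:
  "(\<Sum>i\<in>UNIV. polar (axis i 1, 0) (axis i 1, 0) (\<xi>, 0) (\<xi>, 0))
     = ((4 + 2 * real CARD('p)) * (norm \<xi>)^2 - 8 * (\<Sum>j\<in>UNIV. (norm (A j *v \<xi>))^2)) / 6"
proof -
  have sym: "\<xi> \<bullet> (A j *v axis i 1) = (A j *v \<xi>) $ i" for i j
    using inner_symmetric_matrix[OF A_symmetric[of j]] by (simp add: inner_axis)
  have inner_sum: "(\<Sum>i\<in>UNIV. 4 * ((A j *v \<xi>) $ i)^2 + 2 * (axis i 1 \<bullet> (A j *v axis i 1)) * (\<xi> \<bullet> (A j *v \<xi>)))
      = 4 * (norm (A j *v \<xi>))^2" for j
  proof -
    have "(\<Sum>i\<in>UNIV. 4 * ((A j *v \<xi>) $ i)^2 + 2 * (axis i 1 \<bullet> (A j *v axis i 1)) * (\<xi> \<bullet> (A j *v \<xi>)))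
      = 4 * (\<Sum>i\<in>UNIV. ((A j *v \<xi>) $ i)^2) + 2 * trace (A j) * (\<xi> \<bullet> (A j *v \<xi>))"
      by (simp add: sum.distrib sum_distrib_left sum_distrib_right trace_eq_sum_axis)
    then show ?thesis by (simp add: trace_A norm_power2_vec_sum)
  qed
  have "6 * (\<Sum>i\<in>UNIV. polar (axis i 1, 0) (axis i 1, 0) (\<xi>, 0) (\<xi>, 0))
     = (\<Sum>i\<in>UNIV. 4 * (\<xi> $ i)^2 + 2 * (norm \<xi>)^2
     - 2 * (\<Sum>j\<in>UNIV. 4 * ((A j *v \<xi>) $ i)^2 + 2 * (axis i 1 \<bullet> (A j *v axis i 1)) * (\<xi> \<bullet> (A j *v \<xi>))))"
    unfolding sum_distrib_left polar_xi4_polarized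
    by (intro sum.cong refl) (simp add: inner_axis inner_axis' sym power_mult_distrib algebra_simps)
  also have "\<dots> = 4 * (\<Sum>i\<in>UNIV. (\<xi> $ i)^2) + 2 * real CARD('p) * (norm \<xi>)^2
     - 2 * (\<Sum>i\<in>UNIV. \<Sum>j\<in>UNIV. 4 * ((A j *v \<xi>) $ i)^2 + 2 * (axis i 1 \<bullet> (A j *v axis i 1)) * (\<xi> \<bullet> (A j *v \<xi>)))"
    by (simp add: sum.distrib sum_subtractf sum_distrib_left)
  also have "(\<Sum>i\<in>UNIV. \<Sum>j\<in>UNIV. 4 * ((A j *v \<xi>) $ i)^2 + 2 * (axis i 1 \<bullet> (A j *v axis i 1)) * (\<xi> \<bullet> (A j *v \<xi>)))
     = (\<Sum>j\<in>UNIV. 4 * (norm (A j *v \<xi>))^2)"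
    by (subst sum.swap) (simp only: inner_sum)
  finally show ?thesis
    by (simp add: norm_power2_vec_sum sum_distrib_left[symmetric] algebra_simps)
qed

text \<open>The next two identities come from the \<open>t\<^sup>1\<close>- and \<open>t\<^sup>0\<close>-coefficients of the eikonal equation,
  again after scaling \<open>\<xi>\<close> by \<open>s\<close>.\<close>
lemma polar_pencil_diag: "polar (pencil \<eta> *v \<xi>, 0) (\<xi>, 0) (\<xi>, 0) (0, \<eta>) = 0"
proof -
  define X where "X = ((\<xi>, 0) :: (real^'p) \<times> (real^'q))"
  define Y where "Y = ((0, \<eta>) :: (real^'p) \<times> (real^'q))"
  define W where "W = ((pencil \<eta> *v \<xi>, 0) :: (real^'p) \<times> (real^'q))"
  define V where "V = ((0, psi_vec \<xi>) :: (real^'p) \<times> (real^'q))"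
  define u where "u = (norm \<xi>)^2"
  define w where "w = (norm \<eta>)^2"
  define q where "q = \<xi> \<bullet> (pencil \<eta> *v \<xi>)"
  have "0 + (128 * polar W Y Y Y) * s + (384 * polar W X Y Y + 64 * polar V Y Y Y - 192 * w * q) * s^2
     + (384 * polar W X X Y + 192 * polar V X Y Y) * s^3
     + (128 * polar W X X X + 192 * polar V X X Y + 64 * u * q) * s^4
     + (64 * polar V X X X) * s^5 + 0 * s^6 = 0" for s
  proof -
    have W: "(pencil \<eta> *v (s *\<^sub>R \<xi>), 0::real^'q) = s *\<^sub>R W"
      by (simp add: W_def matrix_vector_mult_scaleR)
    have V: "(0::real^'p, psi_vec (s *\<^sub>R \<xi>)) = s^2 *\<^sub>R V"
      by (simp add: V_def psi_vec_scaleR)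
    have u: "(norm (s *\<^sub>R \<xi>))^2 = s^2 * u"
      by (simp add: u_def power_mult_distrib)
    have q: "(s *\<^sub>R \<xi>) \<bullet> (pencil \<eta> *v (s *\<^sub>R \<xi>)) = s^2 * q"
      by (simp add: q_def matrix_vector_mult_scaleR power2_eq_square)
    from eikonal_coeff_t1[where \<xi>="s *\<^sub>R \<xi>" and \<eta>=\<eta>]
    show ?thesis
      unfolding W V u q polar.scaleR1 polar_expand_scaled_xi X_def[symmetric] Y_def[symmetric] w_def[symmetric]
      by (simp add: power2_eq_square power3_eq_cube power4_eq_xxxx algebra_simps numeral_eq_Suc)
  qed
  from real_poly6_coeffs_eq_0[OF this] have "384 * polar W X X Y + 192 * polar V X Y Y = 0"
    by simp
  moreover have "polar V X Y Y = 0"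
    using polar_xi_eta3_polarized(1)[of \<xi> "psi_vec \<xi>" \<eta>] polar.swap12[of V X Y Y]
    unfolding V_def X_def Y_def by simp
  ultimately show ?thesis unfolding W_def X_def Y_def by simp
qed

lemma eikonal_coeff_t0_scaled_xi:
  fixes \<xi> :: "real^'p" and \<eta> :: "real^'q"
  defines "X \<equiv> (\<xi>, 0)" and "Y \<equiv> (0, \<eta>)"
  shows "16 * (\<Sum>i\<in>UNIV. (polar (axis i 1, 0) Y Y Y + (3 * polar (axis i 1, 0) X Y Y) * s
      + (3 * polar (axis i 1, 0) X X Y) * s^2 + polar (axis i 1, 0) X X X * s^3)^2)
    + 16 * (\<Sum>j\<in>UNIV. (polar (0, axis j 1) Y Y Y + (3 * polar (0, axis j 1) X Y Y) * s
      + (3 * polar (0, axis j 1) X X Y) * s^2 + polar (0, axis j 1) X X X * s^3)^2)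
    + (64 * (\<xi> \<bullet> (pencil \<eta> *v \<xi>))^2) * s^4 = 16 * (s^2 * (norm \<xi>)^2 + (norm \<eta>)^2)^3"
proof -
  have "(norm (s *\<^sub>R \<xi>))^2 = s^2 * (norm \<xi>)^2"
    by (simp add: power_mult_distrib)
  moreover have "(8 * ((s *\<^sub>R \<xi>) \<bullet> (pencil \<eta> *v (s *\<^sub>R \<xi>))))^2 = (64 * (\<xi> \<bullet> (pencil \<eta> *v \<xi>))^2) * s^4"
    by (simp add: matrix_vector_mult_scaleR power2_eq_square power4_eq_xxxx)
  ultimately show ?thesis
    using eikonal_coeff_t0[where \<xi>="s *\<^sub>R \<xi>" and \<eta>=\<eta>]
    unfolding polar_expand_scaled_xi X_def Y_def by (simp add: algebra_simps)
qed

lemma sum_polar_axis_xi_cross: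
  fixes \<xi> :: "real^'p" and \<eta> :: "real^'q"
  defines "X \<equiv> (\<xi>, 0)" and "Y \<equiv> (0, \<eta>)" and "M \<equiv> pencil \<eta>"
  shows "(\<Sum>i\<in>UNIV. polar (axis i 1, 0) Y Y Y * polar (axis i 1, 0) X X X
      + (3 * polar (axis i 1, 0) X Y Y) * (3 * polar (axis i 1, 0) X X Y))
    = 12 * polar (M *v (M *v \<xi>), 0) X X Y - 9 * (norm \<eta>)^2 * polar X X X Y"
proof -
  have zero: "polar (axis i 1, 0) Y Y Y = 0" for i
    unfolding Y_def by (rule polar_xi_eta3)
  have XYY: "polar (axis i 1, 0) X Y Y = 4/3 * ((M *v (M *v \<xi>)) $ i) - (\<xi> $ i) * (norm \<eta>)^2" for i
  proof -
    have "(M *v \<xi>) \<bullet> (M *v axis i 1) = (M *v (M *v \<xi>)) $ i"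
      using inner_symmetric_matrix[OF pencil_symmetric, of "M *v \<xi>" \<eta> "axis i 1"]
      by (simp add: inner_axis M_def)
    then show ?thesis
      unfolding X_def Y_def M_def polar_xi2_eta2_polarized by (simp add: inner_axis)
  qed
  have "(\<Sum>i\<in>UNIV. polar (axis i 1, 0) Y Y Y * polar (axis i 1, 0) X X X
      + (3 * polar (axis i 1, 0) X Y Y) * (3 * polar (axis i 1, 0) X X Y))
    = (\<Sum>i\<in>UNIV. 12 * (((M *v (M *v \<xi>)) $ i) * polar (axis i 1, 0) X X Y)
      - 9 * (norm \<eta>)^2 * ((\<xi> $ i) * polar (axis i 1, 0) X X Y))"
    by (intro sum.cong refl) (simp add: zero XYY algebra_simps)
  also have "\<dots> = 12 * polar (M *v (M *v \<xi>), 0) X X Y - 9 * (norm \<eta>)^2 * polar X X X Y"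
    by (simp add: sum_subtractf sum_distrib_left[symmetric] sum_axis_polar_xi X_def)
  finally show ?thesis .
qed

lemma sum_polar_axis_eta_cross:
  fixes \<xi> :: "real^'p" and \<eta> :: "real^'q"
  defines "X \<equiv> (\<xi>, 0)" and "Y \<equiv> (0, \<eta>)"
  shows "(\<Sum>j\<in>UNIV. polar (0, axis j 1) Y Y Y * polar (0, axis j 1) X X X
      + (3 * polar (0, axis j 1) X Y Y) * (3 * polar (0, axis j 1) X X Y))
    = (norm \<eta>)^2 * polar X X X Y"
proof -
  have "polar (0, axis j 1) X Y Y = 0" for j
    using polar_xi_eta3_polarized(1)[of \<xi> "axis j 1" \<eta>] polar.swap12[of "(0, axis j 1)" X Y Y]
    unfolding X_def Y_def by simp
  moreover have "polar (0, axis j 1) Y Y Y = (\<eta> $ j) * (norm \<eta>)^2" for j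
    unfolding Y_def polar_eta4_polarized by (simp add: inner_axis)
  ultimately have "(\<Sum>j\<in>UNIV. polar (0, axis j 1) Y Y Y * polar (0, axis j 1) X X X
      + (3 * polar (0, axis j 1) X Y Y) * (3 * polar (0, axis j 1) X X Y))
    = (norm \<eta>)^2 * (\<Sum>j\<in>UNIV. (\<eta> $ j) * polar (0, axis j 1) X X X)"
    by (simp add: sum_distrib_left algebra_simps)
  also have "(\<Sum>j\<in>UNIV. (\<eta> $ j) * polar (0, axis j 1) X X X) = polar X X X Y"
    unfolding sum_axis_polar_eta Y_def by (metis polar.swap12 polar.swap23 polar.swap34)
  finally show ?thesis .
qed

lemma polar_pencil_square_diag:
  "polar (pencil \<eta> *v (pencil \<eta> *v \<xi>), 0) (\<xi>, 0) (\<xi>, 0) (0, \<eta>)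
    = 2/3 * (norm \<eta>)^2 * polar (\<xi>, 0) (\<xi>, 0) (\<xi>, 0) (0, \<eta>)"
  using sum_squares_eq_cube_coeff3[OF eikonal_coeff_t0_scaled_xi[where \<xi>=\<xi> and \<eta>=\<eta>]]
  unfolding sum_polar_axis_xi_cross sum_polar_axis_eta_cross by simp

end

section \<open>The Laplacian\<close>

context eikonal_quartic
begin

lemma sum_polar_axis_xi2_xi_eta: "(\<Sum>i\<in>UNIV. polar (axis i 1, 0) (axis i 1, 0) (\<xi>, 0) (0, \<eta>)) = 0"
proof (cases "\<eta> = 0")
  case True
  then show ?thesis using polar.zero4 by (simp add: zero_prod_def)
next
  case False
  define B where "B = (\<lambda>u v x. polar (u, 0) (v, 0) (x, 0) (0::real^'p, \<eta>))"
  interpret sym_3linear_pencil B "pencil \<eta>" "(norm \<eta>)^2"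
  proof unfold_locales
    fix u v w u' :: "real^'p" and r :: real
    show "B u v w = B v u w" and "B u v w = B u w v"
      unfolding B_def by (rule polar.swap12, rule polar.swap23)
    have "(u + u', 0::real^'q) = (u, 0) + (u', 0)" and "(r *\<^sub>R u, 0::real^'q) = r *\<^sub>R (u, 0)"
      by simp_all
    then show "B (u + u') v w = B u v w + B u' v w" and "B (r *\<^sub>R u) v w = r * B u v w"
      unfolding B_def by (simp_all only: polar.add1 polar.scaleR1)
    show "B (pencil \<eta> *v \<xi>) \<xi> \<xi> = 0" for \<xi>
      unfolding B_def by (rule polar_pencil_diag)
    show "B ((pencil \<eta> ** pencil \<eta>) *v \<xi>) \<xi> \<xi> = 2 / 3 * (norm \<eta>)^2 * B \<xi> \<xi> \<xi>" for \<xi>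
      unfolding B_def matrix_vector_mul_assoc[symmetric] by (rule polar_pencil_square_diag)
  qed (simp_all add: pencil_symmetric cube_pencil)
  have "(\<Sum>i\<in>UNIV. B (axis i 1) (axis i 1) \<xi>) = 0"
    using False by (intro trace_contraction_eq_0) simp
  then show ?thesis unfolding B_def .
qed

text \<open>Instantiate before rewriting: as a simp rule this loops, \<open>\<eta> = 0\<close> being an instance.\<close>
lemma polar_split_last2:
  "polar a a (\<xi>, \<eta>) (\<xi>, \<eta>) = polar a a (\<xi>, 0) (\<xi>, 0) + 2 * polar a a (\<xi>, 0) (0, \<eta>) + polar a a (0, \<eta>) (0, \<eta>)"
proof -
  have split: "(\<xi>, \<eta>) = (\<xi>, 0) + (0, \<eta>)" by simp
  have "polar a a (0, \<eta>) (\<xi>, 0) = polar a a (\<xi>, 0) (0, \<eta>)"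
    by (rule polar.swap34[symmetric])
  then show ?thesis
    by (simp only: split polar.add3 polar.add4)
qed

lemma sum_polar_axis_xi2_eta2:
  "(\<Sum>i\<in>UNIV. polar (axis i 1, 0) (axis i 1, 0) (0, \<eta>) (0, \<eta>))
    = 4/3 * ((norm \<eta>)^2 * (2 * real \<nu>)) - real CARD('p) * (norm \<eta>)^2"
proof -
  have "(\<Sum>i\<in>UNIV. polar (axis i 1, 0) (axis i 1, 0) (0, \<eta>) (0, \<eta>))
      = (\<Sum>i\<in>UNIV. 4/3 * (norm (pencil \<eta> *v axis i 1))^2 - (norm \<eta>)^2)"
    by (intro sum.cong refl) (simp add: polar_xi2_eta2)
  also have "\<dots> = 4/3 * (\<Sum>i\<in>UNIV. (norm (pencil \<eta> *v axis i 1))^2) - real CARD('p) * (norm \<eta>)^2"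
    by (simp add: sum_subtractf sum_distrib_left)
  also have "\<dots> = 4/3 * trace (pencil \<eta> ** pencil \<eta>) - real CARD('p) * (norm \<eta>)^2"
    by (simp only: sum_norm_power2_columns[OF pencil_symmetric])
  finally show ?thesis by (simp add: trace_square_pencil)
qed

lemma sum_polar_axis_eta2:
  "(\<Sum>j\<in>UNIV. polar (0, axis j 1) (0, axis j 1) (\<xi>, \<eta>) (\<xi>, \<eta>))
    = 4/3 * (\<Sum>j\<in>UNIV. (norm (A j *v \<xi>))^2) - real CARD('q) * (norm \<xi>)^2
      + (2 * real CARD('q) * (norm \<eta>)^2 + 4 * (norm \<eta>)^2) / 6"
proof -
  define w where "w = (norm \<eta>)^2"
  have swaps: "polar (0, axis j 1) (0, axis j 1) (\<xi>, 0) (\<xi>, 0) = polar (\<xi>, 0) (\<xi>, 0) (0, axis j 1) (0, axis j 1)"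
    "polar (0, axis j 1) (0, axis j 1) (\<xi>, 0) (0, \<eta>) = polar (\<xi>, 0) (0, axis j 1) (0, axis j 1) (0, \<eta>)"
    for j by (metis polar.swap12 polar.swap23 polar.swap34)+
  have "(\<Sum>j\<in>UNIV. polar (0, axis j 1) (0, axis j 1) (\<xi>, \<eta>) (\<xi>, \<eta>))
      = (\<Sum>j\<in>UNIV. (4/3 * (norm (A j *v \<xi>))^2 - (norm \<xi>)^2) + (2 * w + 4 * (\<eta> $ j)^2) / 6)"
    by (intro sum.cong refl) (simp add: polar_split_last2[where \<xi>=\<xi> and \<eta>=\<eta>] swaps polar_xi2_eta2 polar_xi_eta3_polarized(2)
        polar_eta4_polarized(2) pencil_axis inner_axis inner_axis' w_def)
  also have "\<dots> = 4/3 * (\<Sum>j\<in>UNIV. (norm (A j *v \<xi>))^2) - real CARD('q) * (norm \<xi>)^2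
      + (2 * real CARD('q) * w + 4 * w) / 6"
    by (simp add: sum.distrib sum_subtractf sum_distrib_left[symmetric] sum_divide_distrib[symmetric]
        norm_power2_vec_sum[symmetric] w_def)
  finally show ?thesis unfolding w_def .
qed

lemma sum_polar_axis_xi2:
  "(\<Sum>i\<in>UNIV. polar (axis i 1, 0) (axis i 1, 0) (\<xi>, \<eta>) (\<xi>, \<eta>))
    = ((4 + 2 * real CARD('p)) * (norm \<xi>)^2 - 8 * (\<Sum>j\<in>UNIV. (norm (A j *v \<xi>))^2)) / 6
      + 4/3 * ((norm \<eta>)^2 * (2 * real \<nu>)) - real CARD('p) * (norm \<eta>)^2"
  unfolding polar_split_last2[where \<xi>=\<xi> and \<eta>=\<eta>]
  by (simp add: sum.distrib sum_distrib_left[symmetric] sum_polar_axis_xi2_xi2 sum_polar_axis_xi2_xi_eta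
      sum_polar_axis_xi2_eta2)

lemma laplacian_f:
  "laplacian f ((\<xi>, \<eta>), t) =
    4 * (real CARD('p) - 3 * real CARD('q) + 3) * (t\<^sup>2 + (norm \<xi>)\<^sup>2)
    + 4 * (8 * real \<nu> - 1 + real CARD('q) - 3 * real CARD('p)) * (norm \<eta>)\<^sup>2"
proof -
  have "laplacian f ((\<xi>, \<eta>), t) = 4 * real CARD('p) * t^2 + 16 * t * trace (pencil \<eta>)
      + 12 * (\<Sum>i\<in>UNIV. polar (axis i 1, 0) (axis i 1, 0) (\<xi>, \<eta>) (\<xi>, \<eta>))
      - 12 * real CARD('q) * t^2 + 12 * (\<Sum>j\<in>UNIV. polar (0, axis j 1) (0, axis j 1) (\<xi>, \<eta>) (\<xi>, \<eta>))
      + 2 * (6 * t^2 + 2 * ((norm \<xi>)^2 - 3 * (norm \<eta>)^2))"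
    unfolding laplacian_f_expand trace_eq_sum_axis
    by (simp add: sum.distrib sum_subtractf sum_distrib_left[symmetric] algebra_simps)
  also have "\<dots> = 4 * (real CARD('p) - 3 * real CARD('q) + 3) * (t\<^sup>2 + (norm \<xi>)\<^sup>2)
    + 4 * (8 * real \<nu> - 1 + real CARD('q) - 3 * real CARD('p)) * (norm \<eta>)\<^sup>2"
  proof -
    define u where "u = (norm \<xi>)^2"
    define w where "w = (norm \<eta>)^2"
    show ?thesis
      unfolding trace_pencil sum_polar_axis_xi2 sum_polar_axis_eta2 u_def[symmetric] w_def[symmetric]
      by (simp add: field_simps)
  qed
  finally show ?thesis .
qed

end

theorem corollary3p6:
  fixes f :: "((real^'p) \<times> (real^'q)) \<times> real \<Rightarrow> real"
    and \<theta> :: "(real^'p) \<times> (real^'q) \<Rightarrow> real"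
    and A :: "'q \<Rightarrow> real^'p^'p"
    and \<nu> :: nat
  assumes q2: "CARD('q) \<ge> 2"
    and A_sym: "\<And>i. transpose (A i) = A i"
    and A_sim: "\<And>\<eta>. \<eta> \<noteq> 0 \<Longrightarrow>
                   similar_to_signed_diag (\<Sum>i\<in>UNIV. (\<eta> $ i) *\<^sub>R A i) (norm \<eta>) \<nu>"
    and \<theta>_quartic: "hom_quartic \<theta>"
    and f_form: "\<And>\<xi> \<eta> t. f ((\<xi>, \<eta>), t) =
                   t ^ 4 + 2 * ((norm \<xi>)\<^sup>2 - 3 * (norm \<eta>)\<^sup>2) * t\<^sup>2
                   + 8 * (\<xi> \<bullet> ((\<Sum>i\<in>UNIV. (\<eta> $ i) *\<^sub>R A i) *v \<xi>)) * t + \<theta> (\<xi>, \<eta>)"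
    and eikonal: "\<And>x. grad_sq f x = 16 * (norm x) ^ 6"
  shows "\<And>\<xi> \<eta> t. laplacian f ((\<xi>, \<eta>), t) =
           4 * (real CARD('p) - 3 * real CARD('q) + 3) * (t\<^sup>2 + (norm \<xi>)\<^sup>2)
           + 4 * (8 * real \<nu> - 1 + real CARD('q) - 3 * real CARD('p)) * (norm \<eta>)\<^sup>2"
proof -
  obtain C where "\<And>z. \<theta> z = quartic_tensor C z z z z"
    using \<theta>_quartic unfolding hom_quartic_def quartic_tensor_def by blast
  then interpret eikonal_quartic f \<theta> A \<nu> C
    using A_sym A_sim f_form eikonal by unfold_locales
  show "laplacian f ((\<xi>, \<eta>), t) =
           4 * (real CARD('p) - 3 * real CARD('q) + 3) * (t\<^sup>2 + (norm \<xi>)\<^sup>2)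
           + 4 * (8 * real \<nu> - 1 + real CARD('q) - 3 * real CARD('p)) * (norm \<eta>)\<^sup>2" for \<xi> \<eta> t
    by (rule laplacian_f)
qed

end
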